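(* Let $\mathcal T$ be a mesh as in the context, $x,y\in\overline\Omega$ and $i\in\{1,\dots,d\}$ with $x_i=y_i$, $x\in\mathrm{Sk}_i$ and $y\notin\mathrm{Sk}_i$. Then there exists a T-junction $T$ with $\mathrm{odir}(T)=i$ and associated cell $Q=\mathrm{ascell}(T)$ such that, with $j=\mathrm{pdir}(T)$, $\overline T\cap\mathrm{conv}\{x,y\}\ne\emptyset$, $x_j\ne y_j$, and $Q_j\cap\mathrm{conv}\{x_j,y_j\}\ne\emptyset$.
   Context: Fix $d\ge2$, integers $N_1,\dots,N_d\ge1$, $\mathbf p\in\mathbb N^d$, $q_k=\lfloor(p_k+1)/2\rfloor$, $\Omega=\prod_{k=1}^d(0,N_k)$, $\mathrm{AR}=\prod_k[q_k,N_k-q_k]$. A mesh $\mathcal T$ is a finite family of pairwise disjoint sets $E=E_1\times\cdots\times E_d$ (entities) with union $\overline\Omega$, each $E_k$ a singleton $\{n\}$, $n\in\{0,\dots,N_k\}$, or an open interval $(a,b)$ with integers $0\le a<b\le N_k$; cells are entities all of whose components are open intervals; the dimension of an entity is its number of interval components. Only meshes arising as follows are considered: start from a tensor-product mesh given by integer grids $0=g^k_0<\dots<g^k_{M_k}=N_k$ (entities: products of grid points and open grid intervals), each containing $0,\dots,q_k$ and $N_k-q_k,\dots,N_k$, and apply finitely many subdivision steps $\mathrm{subdiv}(\mathcal T,Q,j)$: for a cell $Q\subset\mathrm{AR}$ and direction $j$ with $m=\frac12(\inf Q_j+\sup Q_j)$ an integer, let $D=\overline Q$; for each $\ell\ne j$,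 if $\min D_\ell=q_\ell$ replace $D_\ell$ by $D_\ell\cup[0,q_\ell]$, and if $\max D_\ell=N_\ell-q_\ell$ replace $D_\ell$ by $D_\ell\cup[N_\ell-q_\ell,N_\ell]$; replace each entity $E\subset D$ with $E_j=Q_j$ by the three entities with $j$-th component $(\inf Q_j,m)$, $\{m\}$, $(m,\sup Q_j)$. The $i$-orthogonal skeleton is $\mathrm{Sk}_i=\bigcup_{Q\text{ cell}}\{z\in\overline Q: z_i\in\{\inf Q_i,\sup Q_i\}\}$. A T-junction is an entity $T$ of dimension $d-2$, $T\not\subset\partial\Omega$, such that fewer than four entities $F$ of dimension $d-1$ satisfy $T\subset\partial F$. For a T-junction with singleton components $T_i=\{t_i\}$, $T_j=\{t_j\}$ there is a unique cell $Q=\mathrm{ascell}(T)$ with $T\subset\partial Q$, $t_i\in Q_i$ and $t_j\in\{\inf Q_j,\sup Q_j\}$; then $\mathrm{odir}(T)=i$ and $\mathrm{pdir}(T)=j$. $\mathrm{conv}$ denotes convex hull. *)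

theory Defs
  imports "HOL-Analysis.Analysis"
begin

text \<open>An entity E = E_1 x ... x E_d is encoded componentwise: component k is a pair
  (a,b) of naturals with a \<le> b; (a,a) encodes the singleton {a}, (a,b) with a < b encodes
  the open interval (a,b). Directions are the elements of the finite type 'n, d = CARD('n).\<close>

type_synonym 'n entity = "'n \<Rightarrow> nat \<times> nat"

definition comp_set :: "nat \<times> nat \<Rightarrow> real set" where
  "comp_set c = (if fst c = snd c then {real (fst c)} else {real (fst c)<..<real (snd c)})"

definition ent_set :: "('n::finite) entity \<Rightarrow> (real^'n) set" where
  "ent_set E = {z. \<forall>k. z$k \<in> comp_set (E k)}"

definition edim :: "('n::finite) entity \<Rightarrow> nat" where
  "edim E = card {k. fst (E k) < snd (E k)}"

definition is_cell :: "('n::finite) entity \<Rightarrow> bool" where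
  "is_cell E \<longleftrightarrow> (\<forall>k. fst (E k) < snd (E k))"

definition qdeg :: "('n \<Rightarrow> nat) \<Rightarrow> 'n \<Rightarrow> nat" where
  "qdeg p k = (p k + 1) div 2"

definition Omega :: "('n::finite \<Rightarrow> nat) \<Rightarrow> (real^'n) set" where
  "Omega N = {z. \<forall>k. 0 < z$k \<and> z$k < real (N k)}"

definition AR :: "('n::finite \<Rightarrow> nat) \<Rightarrow> ('n \<Rightarrow> nat) \<Rightarrow> (real^'n) set" where
  "AR N p = {z. \<forall>k. real (qdeg p k) \<le> z$k \<and> z$k \<le> real (N k) - real (qdeg p k)}"

definition grid_ok :: "('n \<Rightarrow> nat) \<Rightarrow> ('n \<Rightarrow> nat) \<Rightarrow> ('n \<Rightarrow> nat set) \<Rightarrow> bool" where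
  "grid_ok N p G \<longleftrightarrow> (\<forall>k. G k \<subseteq> {0..N k} \<and> {0..qdeg p k} \<subseteq> G k
      \<and> {N k - qdeg p k..N k} \<subseteq> G k)"

definition tp_mesh :: "('n \<Rightarrow> nat set) \<Rightarrow> 'n entity set" where
  "tp_mesh G = {E. \<forall>k. (fst (E k) = snd (E k) \<and> fst (E k) \<in> G k)
      \<or> (fst (E k) < snd (E k) \<and> fst (E k) \<in> G k \<and> snd (E k) \<in> G k
          \<and> (\<forall>g\<in>G k. \<not> (fst (E k) < g \<and> g < snd (E k))))}"

definition subdiv_D :: "('n::finite \<Rightarrow> nat) \<Rightarrow> ('n \<Rightarrow> nat) \<Rightarrow> 'n entity \<Rightarrow> 'n \<Rightarrow> (real^'n) set" where
  "subdiv_D N p Q j = {z. \<forall>l.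
      (if l \<noteq> j \<and> fst (Q l) = qdeg p l then 0 else real (fst (Q l))) \<le> z$l \<and>
      z$l \<le> (if l \<noteq> j \<and> real (snd (Q l)) = real (N l) - real (qdeg p l)
               then real (N l) else real (snd (Q l)))}"

definition subdiv :: "('n::finite \<Rightarrow> nat) \<Rightarrow> ('n \<Rightarrow> nat) \<Rightarrow> 'n entity set \<Rightarrow> 'n entity \<Rightarrow> 'n
    \<Rightarrow> 'n entity set" where
  "subdiv N p M Q j =
    (let m = (fst (Q j) + snd (Q j)) div 2;
         S = {E \<in> M. ent_set E \<subseteq> subdiv_D N p Q j \<and> E j = Q j}
     in (M - S) \<union> (\<Union>E\<in>S. {E(j := (fst (Q j), m)), E(j := (m, m)), E(j := (m, snd (Q j)))}))"

inductive is_mesh :: "('n::finite \<Rightarrow> nat) \<Rightarrow> ('n \<Rightarrow> nat) \<Rightarrow> 'n entity set \<Rightarrow> bool"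
  for N p where
  tensor: "grid_ok N p G \<Longrightarrow> is_mesh N p (tp_mesh G)"
| step: "is_mesh N p M \<Longrightarrow> Q \<in> M \<Longrightarrow> is_cell Q \<Longrightarrow> ent_set Q \<subseteq> AR N p
          \<Longrightarrow> even (fst (Q j) + snd (Q j)) \<Longrightarrow> is_mesh N p (subdiv N p M Q j)"

definition skel :: "('n::finite) entity set \<Rightarrow> 'n \<Rightarrow> (real^'n) set" where
  "skel M i = (\<Union>Q\<in>{Q \<in> M. is_cell Q}.
      {z \<in> closure (ent_set Q). z$i \<in> {real (fst (Q i)), real (snd (Q i))}})"

definition is_tjunction :: "('n::finite \<Rightarrow> nat) \<Rightarrow> 'n entity set \<Rightarrow> 'n entity \<Rightarrow> bool" where
  "is_tjunction N M T \<longleftrightarrow> T \<in> M \<and> edim T = CARD('n) - 2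
     \<and> \<not> (ent_set T \<subseteq> frontier (Omega N))
     \<and> card {F \<in> M. edim F = CARD('n) - 1 \<and> ent_set T \<subseteq> rel_frontier (ent_set F)} < 4"

definition assoc_cell :: "('n::finite) entity set \<Rightarrow> 'n entity \<Rightarrow> 'n entity \<Rightarrow> 'n \<Rightarrow> 'n \<Rightarrow> bool" where
  "assoc_cell M T Q i j \<longleftrightarrow> Q \<in> M \<and> is_cell Q \<and> i \<noteq> j
     \<and> fst (T i) = snd (T i) \<and> fst (T j) = snd (T j)
     \<and> ent_set T \<subseteq> frontier (ent_set Q)
     \<and> real (fst (T i)) \<in> comp_set (Q i)
     \<and> real (fst (T j)) \<in> {real (fst (Q j)), real (snd (Q j))}"

definition ascell_data :: "('n::finite) entity set \<Rightarrow> 'n entity \<Rightarrow> 'n entity \<times> 'n \<times> 'n" where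
  "ascell_data M T = (THE c. assoc_cell M T (fst c) (fst (snd c)) (snd (snd c)))"

definition ascell :: "('n::finite) entity set \<Rightarrow> 'n entity \<Rightarrow> 'n entity" where
  "ascell M T = fst (ascell_data M T)"

definition odir :: "('n::finite) entity set \<Rightarrow> 'n entity \<Rightarrow> 'n" where
  "odir M T = fst (snd (ascell_data M T))"

definition pdir :: "('n::finite) entity set \<Rightarrow> 'n entity \<Rightarrow> 'n" where
  "pdir M T = snd (snd (ascell_data M T))"

end

theory Submission
  imports Defs
begin

text \<open>Every admissible mesh is a \<open>mesh_complex\<close>: its entities are disjoint, cover the closed
  domain, have closures that are unions of entities, and have dyadic interval components, and
  subdivision preserves all of this. Let \<open>z\<close> be the last point of the segment from \<open>x\<close> to \<open>y\<close>
  on the (closed) skeleton. Perturb \<open>z\<close> into a generic skeleton point and a slightly later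
  point of the segment into a generic point off the skeleton, and walk from the first to the
  second changing one coordinate at a time: some single step, say in direction \<open>j\<close>, leaves
  the skeleton. Near \<open>z\<close> this step passes from the closure of a cell \<open>Qb\<close> ending at
  \<open>x\<^sub>i = z\<^sub>i\<close> into a cell \<open>Qa\<close> crossing it, and in the slice spanned by the directions \<open>i\<close>
  and \<open>j\<close> the two cells are adjacent along \<open>x\<^sub>j = z\<^sub>j\<close>. The entity through the vertex
  \<open>(z\<^sub>i, z\<^sub>j)\<close> of the slice is then a T-junction: of the four edges that could meet there,
  the one pointing into \<open>Qa\<close> is missing. Its associated cell is \<open>Qa\<close>, which extends from
  \<open>z\<^sub>j\<close> towards \<open>y\<^sub>j\<close>.\<close>

section \<open>Entities as boxes\<close>

definition comp_closure :: "nat \<times> nat \<Rightarrow> real set" where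
  "comp_closure c = {real (fst c)..real (snd c)}"

definition ent_box :: "('n::finite) entity \<Rightarrow> (real^'n) set" where
  "ent_box E = {z. \<forall>k. z$k \<in> comp_closure (E k)}"

definition ent_mid :: "('n::finite) entity \<Rightarrow> real^'n" where
  "ent_mid E = (\<chi> k. (real (fst (E k)) + real (snd (E k))) / 2)"

lemma mem_ent_set: "z \<in> ent_set E \<longleftrightarrow> (\<forall>k. z$k \<in> comp_set (E k))"
  by (simp add: ent_set_def)

lemma mem_ent_box: "z \<in> ent_box E \<longleftrightarrow> (\<forall>k. z$k \<in> comp_closure (E k))"
  by (simp add: ent_box_def)

lemma comp_set_subset_closure: "fst c \<le> snd c \<Longrightarrow> comp_set c \<subseteq> comp_closure c"
  by (auto simp: comp_set_def comp_closure_def)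

lemma comp_set_subset_closure_iff:
  assumes "fst x \<le> snd x"
  shows "comp_set x \<subseteq> comp_closure e \<longleftrightarrow> fst e \<le> fst x \<and> snd x \<le> snd e"
proof (cases "fst x = snd x")
  case True
  then show ?thesis by (simp add: comp_set_def comp_closure_def)
next
  case False
  then have "real (fst x) < real (snd x)" using assms by simp
  then show ?thesis using False
    greaterThanLessThan_subseteq_atLeastAtMost_iff[of "real (fst x)" "real (snd x)"]
    by (simp add: comp_set_def comp_closure_def)
qed

lemma is_cellD: "is_cell E \<Longrightarrow> fst (E k) < snd (E k)"
  by (simp add: is_cell_def)

lemma comp_set_half_inside:
  "fst x < snd x \<Longrightarrow> real (fst x) + 1/2 \<in> comp_set x \<and> real (snd x) - 1/2 \<in> comp_set x"
  by (auto simp: comp_set_def)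

lemma comp_set_eq_interval: "fst c < snd c \<Longrightarrow> comp_set c = {real (fst c)<..<real (snd c)}"
  by (simp add: comp_set_def)

lemma ent_set_subset_box: "(\<forall>k. fst (E k) \<le> snd (E k)) \<Longrightarrow> ent_set E \<subseteq> ent_box E"
  unfolding mem_ent_set mem_ent_box subset_iff by (meson comp_set_subset_closure subsetD)

lemma ent_mid_in_ent_set:
  assumes "\<forall>k. fst (E k) \<le> snd (E k)"
  shows "ent_mid E \<in> ent_set E"
proof -
  have "ent_mid E $ k \<in> comp_set (E k)" for k
    using assms[rule_format, of k]
    by (cases "fst (E k) = snd (E k)") (simp_all add: ent_mid_def comp_set_def)
  then show ?thesis by (simp add: mem_ent_set)
qed

lemma ent_box_eq_cbox: "ent_box E = cbox (\<chi> k. real (fst (E k))) (\<chi> k. real (snd (E k)))"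
  by (auto simp: mem_ent_box comp_closure_def mem_box_cart)

lemma closed_ent_box: "closed (ent_box E)"
  by (simp add: ent_box_eq_cbox closed_cbox)

lemma convex_ent_box: "convex (ent_box E)"
  by (simp add: ent_box_eq_cbox convex_box)

lemma open_ent_set: "is_cell E \<Longrightarrow> open (ent_set E)"
  unfolding ent_set_def is_cell_def by (intro open_vector_box) (simp add: comp_set_eq_interval)

lemma open_Omega: "open (Omega N)"
  unfolding Omega_def using open_vector_box[of "\<lambda>k. {0<..<real (N k)}"] by simp

lemma convex_comb_between:
  fixes a b m z u :: real
  assumes "a \<le> z" "z \<le> b" "a < m" "m < b" "0 < u" "u < 1"
  shows "a < (1 - u) * z + u * m \<and> (1 - u) * z + u * m < b"
proof -
  have "(1 - u) * z + u * m - a = (1 - u) * (z - a) + u * (m - a)"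
    "b - ((1 - u) * z + u * m) = (1 - u) * (b - z) + u * (b - m)"
    by (simp_all add: algebra_simps)
  moreover have "0 \<le> (1 - u) * (z - a)" "0 \<le> (1 - u) * (b - z)" "0 < u * (m - a)" "0 < u * (b - m)"
    using assms by simp_all
  ultimately show ?thesis by linarith
qed

text \<open>The open segment from a point of the box to the midpoint lies in the entity.\<close>
lemma closure_ent_set:
  assumes wf: "\<forall>k. fst (E k) \<le> snd (E k)"
  shows "closure (ent_set E) = ent_box E"
proof
  show "closure (ent_set E) \<subseteq> ent_box E"
    using wf by (intro closure_minimal ent_set_subset_box closed_ent_box)
next
  show "ent_box E \<subseteq> closure (ent_set E)"
  proof
    fix z assume z: "z \<in> ent_box E"
    have "open_segment z (ent_mid E) \<subseteq> ent_set E"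
    proof
      fix w assume "w \<in> open_segment z (ent_mid E)"
      then obtain u :: real where u: "0 < u" "u < 1" and w: "w = (1 - u) *\<^sub>R z + u *\<^sub>R ent_mid E"
        by (auto simp: in_segment)
      have "w$k \<in> comp_set (E k)" for k
      proof -
        have zk: "real (fst (E k)) \<le> z$k" "z$k \<le> real (snd (E k))"
          using z by (auto simp: mem_ent_box comp_closure_def)
        have "w$k = (1 - u) * z$k + u * ((real (fst (E k)) + real (snd (E k))) / 2)"
          by (simp add: w ent_mid_def)
        then show ?thesis
          using convex_comb_between[OF zk _ _ u, of "(real (fst (E k)) + real (snd (E k))) / 2"]
            wf[rule_format, of k] zk
          by (cases "fst (E k) = snd (E k)") (simp_all add: comp_set_def left_diff_distrib)
      qed
      then show "w \<in> ent_set E" by (simp add: mem_ent_set)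
    qed
    then have "closure (open_segment z (ent_mid E)) \<subseteq> closure (ent_set E)" by (rule closure_mono)
    moreover have "z \<in> ent_set E" if "z = ent_mid E" using ent_mid_in_ent_set[OF wf] that by simp
    ultimately show "z \<in> closure (ent_set E)"
      using closure_subset by (fastforce simp: closure_open_segment split: if_splits)
  qed
qed

lemma closure_Omega:
  assumes "\<forall>k. 1 \<le> N k"
  shows "closure (Omega N) = ent_box (\<lambda>k. (0, N k))"
proof -
  have "comp_set (0, N k) = {0<..<real (N k)}" for k
    using assms[rule_format, of k] by (simp add: comp_set_def)
  then have "Omega N = ent_set (\<lambda>k. (0, N k))" by (simp add: Omega_def mem_ent_set set_eq_iff)
  then show ?thesis by (simp add: closure_ent_set)
qed

lemma comp_set_meets_closureD:
  assumes "v \<in> comp_set x" "v \<in> comp_closure e"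
  shows "fst e \<le> snd x" "fst x \<le> snd e" "fst x < snd x \<Longrightarrow> fst e < snd x \<and> fst x < snd e"
proof -
  have e: "real (fst e) \<le> v" "v \<le> real (snd e)" using assms(2) by (auto simp: comp_closure_def)
  have x: "real (fst x) \<le> v" "v \<le> real (snd x)"
    using assms(1) by (auto simp: comp_set_def split: if_splits)
  have "real (fst e) \<le> real (snd x)" "real (fst x) \<le> real (snd e)" using e x by linarith+
  then show "fst e \<le> snd x" "fst x \<le> snd e" by simp_all
  assume "fst x < snd x"
  then have "real (fst x) < v" "v < real (snd x)" using assms(1) by (simp_all add: comp_set_def)
  then have "real (fst e) < real (snd x)" "real (fst x) < real (snd e)" using e by linarith+
  then show "fst e < snd x \<and> fst x < snd e" by simp
qed

lemma mem_ent_set_fun_upd: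
  "z \<in> ent_set (E(j := I)) \<longleftrightarrow> z$j \<in> comp_set I \<and> (\<forall>k. k \<noteq> j \<longrightarrow> z$k \<in> comp_set (E k))"
  by (auto simp: mem_ent_set)

lemma ent_set_fun_upd:
  assumes "comp_set I \<subseteq> comp_set (E j)"
  shows "ent_set (E(j := I)) = ent_set E \<inter> {z. z$j \<in> comp_set I}"
  using assms unfolding set_eq_iff mem_ent_set_fun_upd by (auto simp: mem_ent_set)

lemma ent_box_fun_upd:
  assumes "comp_closure I \<subseteq> comp_closure (E j)"
  shows "ent_box (E(j := I)) = ent_box E \<inter> {z. z$j \<in> comp_closure I}"
proof -
  have "z \<in> ent_box (E(j := I)) \<longleftrightarrow> z$j \<in> comp_closure I \<and> (\<forall>k. k \<noteq> j \<longrightarrow> z$k \<in> comp_closure (E k))"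
    for z by (auto simp: mem_ent_box)
  then show ?thesis using assms unfolding set_eq_iff by (auto simp: mem_ent_box) (metis subsetD)
qed

lemma ent_set_subset_boxD:
  assumes "\<forall>k. fst (X k) \<le> snd (X k)" "ent_set X \<subseteq> ent_box E"
  shows "comp_set (X k) \<subseteq> comp_closure (E k)"
proof
  fix v assume v: "v \<in> comp_set (X k)"
  define z where "z = (\<chi> l. if l = k then v else ent_mid X $ l)"
  have "z \<in> ent_set X"
    using v ent_mid_in_ent_set[OF assms(1)] by (simp add: mem_ent_set z_def)
  then have "z$k \<in> comp_closure (E k)" using assms(2) by (auto simp: mem_ent_box)
  then show "v \<in> comp_closure (E k)" by (simp add: z_def)
qed

lemma comp_set_interval_if_not_nat: "v \<in> comp_set x \<Longrightarrow> v \<notin> \<nat> \<Longrightarrow> fst x < snd x"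
  by (cases "fst x = snd x") (auto simp: comp_set_def)

lemma comp_set_if_not_nat: "fst x \<le> snd x \<Longrightarrow> v \<in> comp_closure x \<Longrightarrow> v \<notin> \<nat> \<Longrightarrow> v \<in> comp_set x"
  by (cases "v = real (fst x) \<or> v = real (snd x)") (auto simp: comp_set_def comp_closure_def)

lemma nat_in_interval_comp: "fst x < snd x \<Longrightarrow> real c \<in> comp_set x \<Longrightarrow> fst x < c \<and> c < snd x"
  by (simp add: comp_set_def)

lemma nat_in_closure_not_comp:
  "fst x \<le> snd x \<Longrightarrow> real c \<in> comp_closure x \<Longrightarrow> real c \<notin> comp_set x \<Longrightarrow> c = fst x \<or> c = snd x"
  by (auto simp: comp_set_def comp_closure_def split: if_splits)

lemma comp_set_inner_step: "fst x < c \<Longrightarrow> c < snd x \<Longrightarrow> \<bar>h\<bar> < 1 \<Longrightarrow> real c + h \<in> comp_set x"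
  by (auto simp: comp_set_def)

lemma comp_set_endpoint_step:
  assumes "fst x < snd x" "c = fst x \<or> c = snd x" "0 < \<bar>h\<bar>" "\<bar>h\<bar> < 1"
  shows "real c + h \<in> comp_set x \<or> real c - h \<in> comp_set x"
  using assms by (auto simp: comp_set_def)

lemma comp_closure_if_step: "real c + h \<in> comp_set x \<Longrightarrow> \<bar>h\<bar> < 1 \<Longrightarrow> real c \<in> comp_closure x"
  by (auto simp: comp_set_def comp_closure_def split: if_splits)

lemma half_step_not_nat: "\<bar>h\<bar> = 1/2 \<Longrightarrow> real c + h \<notin> \<nat>"
proof
  assume "\<bar>h\<bar> = 1/2" "real c + h \<in> \<nat>"
  then obtain m where "real c + h = real m" by (auto elim: Nats_cases)
  then have "2 * real m = 2 * real c + 1 \<or> 2 * real m + 1 = 2 * real c"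
    using \<open>\<bar>h\<bar> = 1/2\<close> by linarith
  then have "2 * m = 2 * c + 1 \<or> 2 * m + 1 = 2 * c" by linarith
  then show False by presburger
qed

lemma disjoint_intervals_ordered:
  assumes "fst x < snd x" "fst y < snd y" "comp_set x \<inter> comp_set y = {}"
  shows "snd x \<le> fst y \<or> snd y \<le> fst x"
proof (rule ccontr)
  assume overlap: "\<not> ?thesis"
  define v where "v = (real (max (fst x) (fst y)) + real (min (snd x) (snd y))) / 2"
  have "v \<in> comp_set x \<inter> comp_set y"
    using assms(1,2) overlap by (auto simp: v_def comp_set_def max_def min_def)
  then show False using assms(3) by blast
qed

lemma adjacent_at_level:
  assumes sep: "\<And>m::nat. \<bar>real m - w\<bar> < \<rho> \<Longrightarrow> real m = w"
    and x: "fst x < snd x" "u \<in> comp_closure x" "\<bar>u - w\<bar> < \<rho>"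
    and y: "fst y < snd y" "v \<in> comp_set y" "\<bar>v - w\<bar> < \<rho>"
    and disj: "comp_set x \<inter> comp_set y = {}" and "u \<noteq> v"
  obtains zj h where "real zj = w" "\<bar>h\<bar> = 1/2" "zj = fst x \<or> zj = snd x" "zj = fst y \<or> zj = snd y"
    "real zj - h \<in> comp_set x" "real zj + h \<in> comp_set y" "u < v \<Longrightarrow> zj = fst y" "v < u \<Longrightarrow> zj = snd y"
proof -
  have u: "real (fst x) \<le> u" "u \<le> real (snd x)" using x(2) by (simp_all add: comp_closure_def)
  have v: "real (fst y) < v" "v < real (snd y)" using y(1,2) by (simp_all add: comp_set_def)
  have near: "real m = w" if "min u v \<le> real m" "real m \<le> max u v" for m
    using sep that x(3) y(3) by (simp add: abs_if min_def max_def split: if_splits)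
  note order = disjoint_intervals_ordered[OF x(1) y(1) disj]
  note half = comp_set_half_inside[OF x(1)] comp_set_half_inside[OF y(1)]
  consider "u < v" | "v < u" using \<open>u \<noteq> v\<close> by linarith
  then show ?thesis
  proof cases
    case 1
    then have "snd x \<le> fst y" using order u v by linarith
    then have "real (snd x) = w" "real (fst y) = w"
      using near[of "snd x"] near[of "fst y"] u v 1 by simp_all
    then show ?thesis using that[of "fst y" "1/2"] half 1 by simp
  next
    case 2
    then have "snd y \<le> fst x" using order u v by linarith
    then have "real (snd y) = w" "real (fst x) = w"
      using near[of "snd y"] near[of "fst x"] u v 2 by simp_all
    then show ?thesis using that[of "snd y" "-1/2"] half 2 by simp
  qed
qed

lemma point_comp_eq: "fst x = snd x \<Longrightarrow> real c \<in> comp_set x \<Longrightarrow> x = (c, c)"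
  by (cases x) (simp add: comp_set_def)

lemma common_half_step:
  assumes "fst x < snd x" "c = fst x \<or> c = snd x" "fst y < c" "c < snd y"
  obtains a where "\<bar>a\<bar> = 1/2" "real c + a \<in> comp_set x" "real c + a \<in> comp_set y"
proof -
  have "\<bar>1/2 :: real\<bar> = 1/2" "\<bar>-1/2 :: real\<bar> = 1/2" by simp_all
  moreover have "real c + 1/2 \<in> comp_set x \<or> real c + -1/2 \<in> comp_set x"
    using comp_set_endpoint_step[OF assms(1,2), of "1/2"] by simp
  moreover have "real c + a \<in> comp_set y" if "\<bar>a\<bar> = 1/2" for a
    using comp_set_inner_step[OF assms(3,4)] that by simp
  ultimately show ?thesis using that by blast
qed

section \<open>Grids and dyadic intervals\<close>

definition grid_gap :: "nat set \<Rightarrow> nat \<Rightarrow> nat \<Rightarrow> bool" where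
  "grid_gap Gk a b \<longleftrightarrow> a \<in> Gk \<and> b \<in> Gk \<and> a < b \<and> (\<forall>g\<in>Gk. \<not> (a < g \<and> g < b))"

definition grid_comp :: "nat set \<Rightarrow> nat \<times> nat \<Rightarrow> bool" where
  "grid_comp Gk c \<longleftrightarrow> (fst c = snd c \<and> fst c \<in> Gk) \<or> grid_gap Gk (fst c) (snd c)"

text \<open>The intervals obtained from a grid gap by repeated bisection.\<close>
definition dyadic_interval :: "nat set \<Rightarrow> nat \<times> nat \<Rightarrow> bool" where
  "dyadic_interval Gk c \<longleftrightarrow> (\<exists>g h n t l. grid_gap Gk g h \<and> l * 2^n = h - g
     \<and> fst c = g + t * l \<and> snd c = g + (t + 1) * l \<and> snd c \<le> h)"

lemma mem_tp_mesh: "E \<in> tp_mesh G \<longleftrightarrow> (\<forall>k. grid_comp (G k) (E k))"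
  by (auto simp: tp_mesh_def grid_comp_def grid_gap_def)

lemma grid_gap_cases:
  assumes "grid_gap Gk g h" "grid_gap Gk g' h'"
  shows "(g = g' \<and> h = h') \<or> h \<le> g' \<or> h' \<le> g"
  using assms unfolding grid_gap_def by (metis linorder_neqE_nat not_le)

lemma grid_comp_disjoint:
  assumes "grid_comp Gk x" "grid_comp Gk y" "x \<noteq> y"
  shows "comp_set x \<inter> comp_set y = {}"
proof (rule ccontr)
  assume "comp_set x \<inter> comp_set y \<noteq> {}"
  then obtain v where v: "v \<in> comp_set x" "v \<in> comp_set y" by blast
  have wf: "fst x \<le> snd x" "fst y \<le> snd y"
    using assms(1,2) by (auto simp: grid_comp_def grid_gap_def)
  note xy = comp_set_meets_closureD[OF v(1) comp_set_subset_closure[OF wf(2), THEN subsetD, OF v(2)]]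
  note yx = comp_set_meets_closureD[OF v(2) comp_set_subset_closure[OF wf(1), THEN subsetD, OF v(1)]]
  show False
    using assms xy yx unfolding grid_comp_def grid_gap_def
    by (metis antisym linorder_neqE_nat prod.collapse)
qed

lemma grid_comp_meets_closure:
  assumes "grid_comp Gk x" "grid_comp Gk e" "comp_set x \<inter> comp_closure e \<noteq> {}"
  shows "comp_set x \<subseteq> comp_closure e"
proof -
  obtain v where v: "v \<in> comp_set x" "v \<in> comp_closure e" using assms(3) by blast
  have wf: "fst x \<le> snd x" using assms(1) by (auto simp: grid_comp_def grid_gap_def)
  note meets = comp_set_meets_closureD[OF v]
  have e_grid: "fst e \<in> Gk" "snd e \<in> Gk" using assms(2) by (auto simp: grid_comp_def grid_gap_def)
  have "fst e \<le> fst x \<and> snd x \<le> snd e"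
  proof (cases "fst x = snd x")
    case True
    then show ?thesis using meets by simp
  next
    case False
    then have gap: "grid_gap Gk (fst x) (snd x)" using assms(1) by (simp add: grid_comp_def)
    then have "fst e < snd x" "fst x < snd e" using meets by (simp_all add: grid_gap_def)
    then show ?thesis using gap e_grid unfolding grid_gap_def by (meson not_le)
  qed
  then show ?thesis using comp_set_subset_closure_iff[OF wf] by blast
qed

lemma grid_comp_exists:
  assumes "finite Gk" "0 \<in> Gk" "Nk \<in> Gk" "0 \<le> v" "v \<le> real Nk"
  shows "\<exists>c. grid_comp Gk c \<and> v \<in> comp_set c"
proof (cases "\<exists>g\<in>Gk. real g = v")
  case True
  then obtain g where "g \<in> Gk" "real g = v" by blast
  then show ?thesis by (intro exI[of _ "(g, g)"]) (auto simp: grid_comp_def comp_set_def)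
next
  case False
  define L where "L = {g\<in>Gk. real g < v}"
  define U where "U = {g\<in>Gk. v < real g}"
  have LU: "finite L" "finite U" "0 \<in> L" "Nk \<in> U"
    using False assms by (force simp: L_def U_def)+
  define a where "a = Max L"
  define b where "b = Min U"
  have "a \<in> L" "b \<in> U" using LU Max_in Min_in by (auto simp: a_def b_def)
  then have a: "a \<in> Gk" "real a < v" and b: "b \<in> Gk" "v < real b" by (simp_all add: L_def U_def)
  have a_max: "g \<le> a" if "g \<in> Gk" "real g < v" for g
    using that LU by (simp add: a_def L_def)
  have b_min: "b \<le> g" if "g \<in> Gk" "v < real g" for g
    using that LU by (simp add: b_def U_def)
  have "grid_gap Gk a b"
    unfolding grid_gap_def
  proof (intro conjI ballI notI)
    show "a < b" using a(2) b(2) by simp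
    fix g assume "g \<in> Gk" "a < g \<and> g < b"
    moreover have "real g < v \<or> v < real g" using False \<open>g \<in> Gk\<close> by force
    ultimately show False using a_max b_min by fastforce
  qed (use a b in auto)
  then show ?thesis
    using a(2) b(2) by (intro exI[of _ "(a, b)"]) (auto simp: grid_comp_def comp_set_def)
qed

lemma dyadic_halves:
  assumes "dyadic_interval Gk (lo, hi)" "even (lo + hi)"
  shows "dyadic_interval Gk (lo, (lo + hi) div 2)" "dyadic_interval Gk ((lo + hi) div 2, hi)"
proof -
  obtain g h n t l where A: "grid_gap Gk g h" "l * 2^n = h - g" "lo = g + t * l"
    "hi = g + (t + 1) * l" "hi \<le> h"
    using assms(1) unfolding dyadic_interval_def fst_conv snd_conv by blast
  have "lo + hi = 2 * (g + t * l) + l" using A(3,4) by simp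
  then obtain l' where l': "l = 2 * l'"
    using assms(2) by (metis dvd_add_right_iff dvd_triv_left evenE)
  have m: "(lo + hi) div 2 = g + (2 * t + 1) * l'" using A(3,4) l' by (simp add: algebra_simps)
  have ends: "lo = g + (2 * t) * l'" "hi = g + (2 * t + 1 + 1) * l'" using A(3,4) l' by simp_all
  have scale: "l' * 2 ^ Suc n = h - g" using A(2) l' by (simp add: ac_simps)
  have "(lo + hi) div 2 \<le> h" using A(3-5) by simp
  then show "dyadic_interval Gk (lo, (lo + hi) div 2)" "dyadic_interval Gk ((lo + hi) div 2, hi)"
    unfolding dyadic_interval_def fst_conv snd_conv using A(1,5) scale m ends by blast+
qed

text \<open>A strictly finer level of the bisection has length \<open>l\<close> with \<open>l' = 2 * w * l\<close>, so the
  midpoint of the coarser interval is an endpoint of the finer level.\<close>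
lemma dyadic_cells_nested_arith:
  fixes n n' t t' l l' :: nat
  assumes "l * 2^n = L" "l' * 2^n' = L" "0 < l"
    and "t' * l' \<le> t * l" "(t + 1) * l \<le> (t' + 1) * l'"
    "(t * l, (t + 1) * l) \<noteq> (t' * l', (t' + 1) * l')"
  shows "2 * ((t + 1) * l) \<le> (2 * t' + 1) * l' \<or> (2 * t' + 1) * l' \<le> 2 * (t * l)"
proof -
  have "l < l'"
  proof -
    have "l \<le> l'" using assms(4,5) by (simp add: algebra_simps)
    moreover have "l \<noteq> l'" using assms(3-6) by (auto simp: mult_le_cancel2)
    ultimately show ?thesis by simp
  qed
  have "n' < n"
  proof (rule ccontr)
    assume "\<not> n' < n"
    then have "(2::nat) ^ n' = 2 ^ n * 2 ^ (n' - n)" by (simp flip: power_add)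
    then have "l * 2 ^ n = (l' * 2 ^ (n' - n)) * 2 ^ n" using assms(1,2) by (simp add: ac_simps)
    then have "l = l' * 2 ^ (n' - n)" by simp
    then show False
      using \<open>l < l'\<close>
      by (metis leD le_add1 mult_le_mono2 mult.right_neutral one_le_numeral one_le_power)
  qed
  define w where "w = (2::nat) ^ (n - n' - 1)"
  have "(2::nat) ^ n = 2 ^ n' * (2 * w)"
    using \<open>n' < n\<close> by (simp add: w_def flip: power_add power_Suc)
  then have "l' * 2 ^ n' = (l * (2 * w)) * 2 ^ n'" using assms(1,2) by (simp add: ac_simps)
  then have lw: "l' = l * (2 * w)" by simp
  have "t + 1 \<le> (2 * t' + 1) * w \<or> (2 * t' + 1) * w \<le> t" by linarith
  then show ?thesis
  proof
    assume "t + 1 \<le> (2 * t' + 1) * w"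
    then have "(t + 1) * (2 * l) \<le> ((2 * t' + 1) * w) * (2 * l)" by (rule mult_le_mono1)
    then show ?thesis by (simp add: lw algebra_simps)
  next
    assume "(2 * t' + 1) * w \<le> t"
    then have "((2 * t' + 1) * w) * (2 * l) \<le> t * (2 * l)" by (rule mult_le_mono1)
    then show ?thesis by (simp add: lw algebra_simps)
  qed
qed

lemma dyadic_subinterval_in_half:
  assumes "dyadic_interval Gk x" "dyadic_interval Gk e" "fst x < snd x"
    and "fst e \<le> fst x" "snd x \<le> snd e" "x \<noteq> e"
  shows "2 * snd x \<le> fst e + snd e \<or> fst e + snd e \<le> 2 * fst x"
proof -
  obtain g h n t l where A: "grid_gap Gk g h" "l * 2^n = h - g" "fst x = g + t * l"
    "snd x = g + (t + 1) * l" "snd x \<le> h"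
    using assms(1) unfolding dyadic_interval_def by blast
  obtain g' h' n' t' l' where B: "grid_gap Gk g' h'" "l' * 2^n' = h' - g'" "fst e = g' + t' * l'"
    "snd e = g' + (t' + 1) * l'" "snd e \<le> h'"
    using assms(2) unfolding dyadic_interval_def by blast
  have "0 < l" using A(3,4) assms(3) by simp
  have same_gap: "g' = g \<and> h' = h"
    using grid_gap_cases[OF A(1) B(1)] A(3-5) B(3-5) assms(3-5) by auto
  have "(t * l, (t + 1) * l) \<noteq> (t' * l', (t' + 1) * l')"
    using assms(6) A(3,4) B(3,4) same_gap by (metis prod.collapse prod.inject)
  moreover have "t' * l' \<le> t * l" "(t + 1) * l \<le> (t' + 1) * l'"
    using assms(4,5) A(3,4) B(3,4) same_gap by simp_all
  ultimately have "2 * ((t + 1) * l) \<le> (2 * t' + 1) * l' \<or> (2 * t' + 1) * l' \<le> 2 * (t * l)"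
    using dyadic_cells_nested_arith[OF A(2) _ \<open>0 < l\<close>] B(2) same_gap by simp
  then show ?thesis using A(3,4) B(3,4) same_gap by (auto simp: algebra_simps)
qed

section \<open>The mesh invariant\<close>

text \<open>The invariant of admissible meshes. Dyadicity with respect to the grid of the initial
  tensor-product mesh is what makes \<open>meets_box_subset\<close> survive subdivision.\<close>
locale mesh_complex =
  fixes N :: "'n::finite \<Rightarrow> nat" and G :: "'n \<Rightarrow> nat set" and M :: "'n entity set"
  assumes comp_le: "E \<in> M \<Longrightarrow> fst (E k) \<le> snd (E k)"
    and comp_le_N: "E \<in> M \<Longrightarrow> snd (E k) \<le> N k"
    and disjoint: "E \<in> M \<Longrightarrow> F \<in> M \<Longrightarrow> E \<noteq> F \<Longrightarrow> ent_set E \<inter> ent_set F = {}"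
    and covers: "ent_box (\<lambda>k. (0, N k)) \<subseteq> (\<Union>E\<in>M. ent_set E)"
    and meets_box_subset: "E \<in> M \<Longrightarrow> X \<in> M \<Longrightarrow> ent_set X \<inter> ent_box E \<noteq> {} \<Longrightarrow> ent_set X \<subseteq> ent_box E"
    and dyadic: "E \<in> M \<Longrightarrow> fst (E k) < snd (E k) \<Longrightarrow> dyadic_interval (G k) (E k)"

lemma grid_okD:
  assumes "grid_ok N p G"
  shows "finite (G k)" "G k \<subseteq> {0..N k}" "0 \<in> G k" "N k \<in> G k"
proof -
  have "G k \<subseteq> {0..N k}" "{0..qdeg p k} \<subseteq> G k" "{N k - qdeg p k..N k} \<subseteq> G k"
    using assms unfolding grid_ok_def by blast+
  then show "finite (G k)" "G k \<subseteq> {0..N k}" "0 \<in> G k" "N k \<in> G k"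
    using finite_subset[of "G k" "{0..N k}"] by auto
qed

lemma tp_mesh_covers:
  assumes "grid_ok N p G"
  shows "ent_box (\<lambda>k. (0, N k)) \<subseteq> (\<Union>E\<in>tp_mesh G. ent_set E)"
proof
  fix z assume "z \<in> ent_box (\<lambda>k. (0, N k))"
  then have "0 \<le> z$k" "z$k \<le> real (N k)" for k by (auto simp: mem_ent_box comp_closure_def)
  then have "\<exists>c. grid_comp (G k) c \<and> z$k \<in> comp_set c" for k
    using grid_comp_exists[OF grid_okD(1,3,4)[OF assms]] by blast
  then obtain E where "\<forall>k. grid_comp (G k) (E k) \<and> z$k \<in> comp_set (E k)" by metis
  then show "z \<in> (\<Union>E\<in>tp_mesh G. ent_set E)" by (auto simp: mem_tp_mesh mem_ent_set)
qed

lemma mesh_complex_tp_mesh: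
  assumes "grid_ok N p G"
  shows "mesh_complex N G (tp_mesh G)"
proof
  fix E k assume "E \<in> tp_mesh G"
  then have E: "grid_comp (G k) (E k)" by (simp add: mem_tp_mesh)
  then show "fst (E k) \<le> snd (E k)" "snd (E k) \<le> N k"
    using grid_okD(2)[OF assms, of k] unfolding grid_comp_def grid_gap_def by auto
  assume "fst (E k) < snd (E k)"
  then have "grid_gap (G k) (fst (E k)) (snd (E k))" using E by (simp add: grid_comp_def)
  then show "dyadic_interval (G k) (E k)" unfolding dyadic_interval_def
    by (intro exI[of _ "fst (E k)"] exI[of _ "snd (E k)"] exI[of _ 0] exI[of _ 0]
        exI[of _ "snd (E k) - fst (E k)"]) (simp add: grid_gap_def)
next
  fix E F assume EF: "E \<in> tp_mesh G" "F \<in> tp_mesh G" "E \<noteq> F"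
  then obtain k where "E k \<noteq> F k" by blast
  then have "comp_set (E k) \<inter> comp_set (F k) = {}"
    using EF grid_comp_disjoint[of "G k" "E k" "F k"] by (simp add: mem_tp_mesh)
  then show "ent_set E \<inter> ent_set F = {}" by (metis disjoint_iff mem_ent_set)
next
  show "ent_box (\<lambda>k. (0, N k)) \<subseteq> (\<Union>E\<in>tp_mesh G. ent_set E)" by (rule tp_mesh_covers[OF assms])
next
  fix E X assume EX: "E \<in> tp_mesh G" "X \<in> tp_mesh G" and "ent_set X \<inter> ent_box E \<noteq> {}"
  then obtain z where z: "z \<in> ent_set X" "z \<in> ent_box E" by blast
  have "comp_set (X k) \<subseteq> comp_closure (E k)" for k
  proof (rule grid_comp_meets_closure)
    show "grid_comp (G k) (X k)" "grid_comp (G k) (E k)" using EX by (simp_all add: mem_tp_mesh)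
    show "comp_set (X k) \<inter> comp_closure (E k) \<noteq> {}"
      using z by (auto simp: mem_ent_set mem_ent_box)
  qed
  then show "ent_set X \<subseteq> ent_box E" unfolding subset_iff mem_ent_set mem_ent_box by blast
qed

definition split_comps :: "nat \<Rightarrow> nat \<Rightarrow> nat \<Rightarrow> (nat \<times> nat) set" where
  "split_comps lo m hi = {(lo, m), (m, m), (m, hi)}"

lemma split_comps_bounds:
  "lo < m \<Longrightarrow> m < hi \<Longrightarrow> I \<in> split_comps lo m hi \<Longrightarrow> fst I \<le> snd I \<and> lo \<le> fst I \<and> snd I \<le> hi"
  by (auto simp: split_comps_def)

lemma split_comps_disjoint:
  "lo < m \<Longrightarrow> m < hi \<Longrightarrow> I \<in> split_comps lo m hi \<Longrightarrow> I' \<in> split_comps lo m hi \<Longrightarrow> I \<noteq> I'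
    \<Longrightarrow> comp_set I \<inter> comp_set I' = {}"
  by (auto simp: split_comps_def comp_set_def)

lemma split_comps_cover:
  "lo < m \<Longrightarrow> m < hi \<Longrightarrow> v \<in> comp_set (lo, hi) \<Longrightarrow> \<exists>I\<in>split_comps lo m hi. v \<in> comp_set I"
  by (cases "v < real m"; cases "v = real m") (auto simp: split_comps_def comp_set_def)

lemma split_comps_meets_closure:
  assumes "lo < m" "m < hi" "I \<in> split_comps lo m hi" "I' \<in> split_comps lo m hi"
    and "comp_set I' \<inter> comp_closure I \<noteq> {}"
  shows "comp_set I' \<subseteq> comp_closure I"
proof -
  obtain v where v: "v \<in> comp_set I'" "v \<in> comp_closure I" using assms(5) by blast
  have "fst I' \<le> snd I'" using split_comps_bounds[OF assms(1,2,4)] by simp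
  then show ?thesis
    using assms(1-4) comp_set_meets_closureD[OF v] comp_set_subset_closure_iff
    by (auto simp: split_comps_def)
qed

lemma half_interval_meets_split:
  assumes "lo < m" "m < hi" "2 * m = lo + hi" "I \<in> split_comps lo m hi"
    and "fst x < snd x" "lo \<le> fst x" "snd x \<le> hi" "2 * snd x \<le> lo + hi \<or> lo + hi \<le> 2 * fst x"
    and "comp_set x \<inter> comp_closure I \<noteq> {}"
  shows "comp_set x \<subseteq> comp_closure I"
proof -
  obtain v where v: "v \<in> comp_set x" "v \<in> comp_closure I" using assms(9) by blast
  show ?thesis
    using assms(1-8) comp_set_meets_closureD[OF v] comp_set_subset_closure_iff[of x I]
    by (auto simp: split_comps_def)
qed

text \<open>Of the
  definition of \<open>S\<close> in \<open>subdiv\<close> only \<open>S_closed\<close> matters; it holds because \<open>subdiv_D\<close> is closed.\<close>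
locale mesh_refinement = mesh_complex N G M
  for N :: "'n::finite \<Rightarrow> nat" and G M +
  fixes Q :: "'n entity" and j :: 'n and S :: "'n entity set"
  assumes Q_mem: "Q \<in> M" and Q_cell: "is_cell Q" and Q_even: "even (fst (Q j) + snd (Q j))"
    and S_sub: "S \<subseteq> M" and S_comp: "E \<in> S \<Longrightarrow> E j = Q j"
    and S_closed: "E \<in> S \<Longrightarrow> X \<in> M \<Longrightarrow> ent_set X \<subseteq> ent_box E \<Longrightarrow> X j = Q j \<Longrightarrow> X \<in> S"
begin

abbreviation "lo \<equiv> fst (Q j)"
abbreviation "hi \<equiv> snd (Q j)"
abbreviation "mid \<equiv> (lo + hi) div 2"

definition refined :: "'n entity set" where
  "refined = (M - S) \<union> (\<Union>E\<in>S. (\<lambda>I. E(j := I)) ` split_comps lo mid hi)"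

lemma lo_mid_hi: "lo < mid" "mid < hi" "2 * mid = lo + hi"
proof -
  show "2 * mid = lo + hi" using Q_even by simp
  moreover have "lo < hi" using Q_cell by (simp add: is_cell_def)
  ultimately show "lo < mid" "mid < hi" by linarith+
qed

lemma refined_parent:
  assumes "X \<in> refined"
  obtains P where "P \<in> M" "P \<notin> S" "X = P"
  | P I where "P \<in> S" "I \<in> split_comps lo mid hi" "X = P(j := I)"
  using assms by (auto simp: refined_def)

lemma piece_ent_set:
  assumes "P \<in> S" "I \<in> split_comps lo mid hi"
  shows "ent_set (P(j := I)) = ent_set P \<inter> {z. z$j \<in> comp_set I}"
    and "ent_box (P(j := I)) = ent_box P \<inter> {z. z$j \<in> comp_closure I}"
proof -
  have I: "fst I \<le> snd I" "lo \<le> fst I" "snd I \<le> hi"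
    using split_comps_bounds[OF lo_mid_hi(1,2) assms(2)] by auto
  have "P j = (lo, hi)" using S_comp[OF assms(1)] by simp
  moreover have "comp_set I \<subseteq> comp_set (lo, hi)"
    using assms(2) lo_mid_hi by (auto simp: split_comps_def comp_set_def)
  moreover have "comp_closure I \<subseteq> comp_closure (lo, hi)"
    using I by (auto simp: comp_closure_def)
  ultimately show "ent_set (P(j := I)) = ent_set P \<inter> {z. z$j \<in> comp_set I}"
    and "ent_box (P(j := I)) = ent_box P \<inter> {z. z$j \<in> comp_closure I}"
    by (simp_all add: ent_set_fun_upd ent_box_fun_upd)
qed

lemma refined_parent_set:
  assumes "X \<in> refined"
  obtains P where "P \<in> M" "ent_set X \<subseteq> ent_set P"
  using assms piece_ent_set S_sub by (cases rule: refined_parent) blast+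

lemma refined_comp_bounds:
  assumes "X \<in> refined"
  shows "fst (X k) \<le> snd (X k) \<and> snd (X k) \<le> N k"
  using assms
proof (cases rule: refined_parent)
  case (2 P I)
  then have "P \<in> M" "P j = (lo, hi)" using S_sub S_comp by auto
  then show ?thesis
    using 2 split_comps_bounds[OF lo_mid_hi(1,2) 2(2)] comp_le comp_le_N[of P j] comp_le_N[of P k]
    by (cases "k = j") auto
qed (use comp_le comp_le_N in auto)

lemma refined_disjoint:
  assumes "A \<in> refined" "B \<in> refined" "A \<noteq> B"
  shows "ent_set A \<inter> ent_set B = {}"
  using assms(1)
proof (cases rule: refined_parent)
  case A: (1 P)
  from assms(2) show ?thesis
  proof (cases rule: refined_parent)
    case (1 P') then show ?thesis using A assms(3) disjoint by blast
  next
    case (2 P' I')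
    then have "P \<noteq> P'" using A by blast
    then show ?thesis using A 2 piece_ent_set(1) S_sub disjoint by blast
  qed
next
  case A: (2 P I)
  from assms(2) show ?thesis
  proof (cases rule: refined_parent)
    case (1 P')
    then have "P \<noteq> P'" using A by blast
    then show ?thesis using A 1 piece_ent_set(1) S_sub disjoint by blast
  next
    case (2 P' I')
    show ?thesis
    proof (cases "P = P'")
      case True
      then have "comp_set I \<inter> comp_set I' = {}"
        using A 2 assms(3) split_comps_disjoint[OF lo_mid_hi(1,2)] by blast
      then show ?thesis using A 2 True piece_ent_set(1) by blast
    next
      case False
      then show ?thesis using A 2 piece_ent_set(1) S_sub disjoint by blast
    qed
  qed
qed

lemma refined_covers: "ent_box (\<lambda>k. (0, N k)) \<subseteq> (\<Union>X\<in>refined. ent_set X)"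
proof
  fix z assume "z \<in> ent_box (\<lambda>k. (0, N k))"
  then obtain E where E: "E \<in> M" "z \<in> ent_set E" using covers by blast
  show "z \<in> (\<Union>X\<in>refined. ent_set X)"
  proof (cases "E \<in> S")
    case True
    then have "z$j \<in> comp_set (lo, hi)" using E(2) S_comp by (metis mem_ent_set prod.collapse)
    then obtain I where "I \<in> split_comps lo mid hi" "z$j \<in> comp_set I"
      using split_comps_cover[OF lo_mid_hi(1,2)] by blast
    then show ?thesis
      using True E(2) piece_ent_set(1) by (auto simp: refined_def)
  qed (use E in \<open>auto simp: refined_def\<close>)
qed

text \<open>The only delicate case of the closure property: an old entity whose \<open>j\<close>-component is a
  proper dyadic subinterval of \<open>Q j\<close> lies in one half, hence inside the closure of one piece.\<close>
lemma refined_meets_piece: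
  assumes "P \<in> S" "I \<in> split_comps lo mid hi" "B \<in> refined"
    and meet: "ent_set B \<inter> ent_box (P(j := I)) \<noteq> {}"
  shows "comp_set (B j) \<subseteq> comp_closure I"
proof -
  obtain z where "z \<in> ent_set B" "z \<in> ent_box (P(j := I))" using meet by blast
  then have "z$j \<in> comp_set (B j)" "z$j \<in> comp_closure I"
    by (simp_all add: mem_ent_set mem_ent_box del: fun_upd_apply) (metis fun_upd_same)
  then have "comp_set (B j) \<inter> comp_closure I \<noteq> {}" by blast
  from assms(3) show ?thesis
  proof (cases rule: refined_parent)
    case (1 B')
    have "ent_set B \<subseteq> ent_box P"
      using meet meets_box_subset[of P B] 1 S_sub assms(1) piece_ent_set(2)[OF assms(1,2)] by blast
    then have "comp_set (B j) \<subseteq> comp_closure (lo, hi)"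
      using ent_set_subset_boxD[of B P j] S_comp[OF assms(1)] comp_le 1 by simp
    then have sub: "lo \<le> fst (B j)" "snd (B j) \<le> hi"
      using comp_set_subset_closure_iff[of "B j" "(lo, hi)"] comp_le 1 by auto
    show ?thesis
    proof (cases "fst (B j) < snd (B j)")
      case True
      have "B j \<noteq> Q j" using S_closed[OF assms(1)] 1 \<open>ent_set B \<subseteq> ent_box P\<close> by blast
      then have "2 * snd (B j) \<le> lo + hi \<or> lo + hi \<le> 2 * fst (B j)"
        using dyadic_subinterval_in_half[OF dyadic[of B j] dyadic[OF Q_mem, of j]] 1 True sub Q_cell
        by (auto simp: is_cell_def)
      then show ?thesis
        using half_interval_meets_split[OF lo_mid_hi assms(2) True sub] \<open>comp_set (B j) \<inter> _ \<noteq> {}\<close>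
          by blast
    next
      case False
      then have "fst (B j) = snd (B j)" using comp_le 1 by (meson le_neq_implies_less)
      then show ?thesis using \<open>comp_set (B j) \<inter> _ \<noteq> {}\<close> by (auto simp: comp_set_def)
    qed
  next
    case (2 B' I')
    then show ?thesis
      using split_comps_meets_closure[OF lo_mid_hi(1,2) assms(2)] \<open>comp_set (B j) \<inter> _ \<noteq> {}\<close> by simp
  qed
qed

lemma refined_meets_box_subset:
  assumes A: "A \<in> refined" and B: "B \<in> refined" and meet: "ent_set B \<inter> ent_box A \<noteq> {}"
  shows "ent_set B \<subseteq> ent_box A"
proof -
  obtain PB where PB: "PB \<in> M" "ent_set B \<subseteq> ent_set PB" by (rule refined_parent_set[OF B])
  obtain z where z: "z \<in> ent_set B" "z \<in> ent_box A" using meet by blast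
  have lift: "ent_set B \<subseteq> ent_box P" if "P \<in> M" "ent_box A \<subseteq> ent_box P" for P
  proof -
    have "z \<in> ent_set PB \<inter> ent_box P" using z PB(2) that(2) by blast
    then show ?thesis using meets_box_subset[OF that(1) PB(1)] PB(2) by blast
  qed
  from A show ?thesis
  proof (cases rule: refined_parent)
    case (1 P) then show ?thesis using lift[of P] by simp
  next
    case (2 P I)
    have B_j: "comp_set (B j) \<subseteq> comp_closure I"
      using refined_meets_piece[OF 2(1,2) B] meet[unfolded 2(3)] .
    have A_box: "ent_box A = ent_box P \<inter> {z. z$j \<in> comp_closure I}"
      unfolding 2(3) by (rule piece_ent_set(2)[OF 2(1,2)])
    have "P \<in> M" using S_sub 2(1) by blast
    then have "ent_set B \<subseteq> ent_box P" using lift A_box by blast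
    show ?thesis
    proof
      fix w assume w: "w \<in> ent_set B"
      then have "w$j \<in> comp_closure I" using B_j by (auto simp: mem_ent_set)
      moreover have "w \<in> ent_box P" using w \<open>ent_set B \<subseteq> ent_box P\<close> by blast
      ultimately show "w \<in> ent_box A" unfolding A_box by blast
    qed
  qed
qed

lemma refined_dyadic:
  assumes "X \<in> refined" "fst (X k) < snd (X k)"
  shows "dyadic_interval (G k) (X k)"
  using assms(1)
proof (cases rule: refined_parent)
  case (2 P I)
  have Qj: "dyadic_interval (G j) (lo, hi)"
    using dyadic[OF Q_mem, of j] Q_cell by (simp add: is_cell_def)
  show ?thesis
  proof (cases "k = j")
    case True
    then have "I = (lo, mid) \<or> I = (mid, hi)" using 2 assms(2) by (auto simp: split_comps_def)
    then show ?thesis using dyadic_halves[OF Qj Q_even] True 2(3) by auto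
  next
    case False
    then show ?thesis using 2 S_sub assms(2) dyadic[of P k] by auto
  qed
qed (use assms dyadic in auto)

lemma mesh_complex_refined: "mesh_complex N G refined"
  using refined_comp_bounds refined_disjoint refined_covers refined_meets_box_subset refined_dyadic
  by unfold_locales blast+

end

lemma closed_subdiv_D: "closed (subdiv_D N p Q j)"
  unfolding subdiv_D_def atLeastAtMost_iff[symmetric] by (rule closed_vector_box) simp

lemma mesh_complex_is_mesh:
  assumes "is_mesh N p M"
  shows "\<exists>G. mesh_complex N G M"
  using assms
proof (induction rule: is_mesh.induct)
  case (tensor G)
  then show ?case using mesh_complex_tp_mesh by blast
next
  case (step M Q j)
  then obtain G where G: "mesh_complex N G M" by blast
  define S where "S = {E \<in> M. ent_set E \<subseteq> subdiv_D N p Q j \<and> E j = Q j}"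
  have "mesh_refinement N G M Q j S"
  proof (intro mesh_refinement.intro mesh_refinement_axioms.intro)
    show "mesh_complex N G M" "Q \<in> M" "is_cell Q" "even (fst (Q j) + snd (Q j))"
      using G step.hyps by simp_all
    show "S \<subseteq> M" "\<And>E. E \<in> S \<Longrightarrow> E j = Q j" by (auto simp: S_def)
    fix E X assume "E \<in> S" "X \<in> M" "ent_set X \<subseteq> ent_box E" "X j = Q j"
    moreover have "ent_box E = closure (ent_set E)"
      using \<open>E \<in> S\<close> mesh_complex.comp_le[OF G, of E] closure_ent_set[of E] by (simp add: S_def)
    moreover have "closure (ent_set E) \<subseteq> subdiv_D N p Q j"
      using \<open>E \<in> S\<close> by (intro closure_minimal closed_subdiv_D) (simp add: S_def)
    ultimately show "X \<in> S" by (auto simp: S_def)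
  qed
  then interpret mesh_refinement N G M Q j S .
  have "subdiv N p M Q j = refined"
    unfolding subdiv_def refined_def Let_def S_def[symmetric] split_comps_def by simp
  then show ?case using mesh_complex_refined by auto
qed

context mesh_complex
begin

abbreviation closed_domain :: "(real^'n) set" where
  "closed_domain \<equiv> ent_box (\<lambda>k. (0, N k))"

lemma closure_mesh_ent: "E \<in> M \<Longrightarrow> closure (ent_set E) = ent_box E"
  by (simp add: closure_ent_set comp_le)

lemma mesh_ent_unique: "E \<in> M \<Longrightarrow> F \<in> M \<Longrightarrow> z \<in> ent_set E \<Longrightarrow> z \<in> ent_set F \<Longrightarrow> E = F"
  using disjoint by blast

lemma mesh_ent_box_subset_domain:
  assumes "E \<in> M"
  shows "ent_box E \<subseteq> closed_domain"
proof
  fix z assume "z \<in> ent_box E"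
  then have "real (fst (E k)) \<le> z$k" "z$k \<le> real (snd (E k))" for k
    by (simp_all add: mem_ent_box comp_closure_def)
  moreover have "real (snd (E k)) \<le> real (N k)" for k using comp_le_N[OF assms] by simp
  ultimately have "0 \<le> z$k \<and> z$k \<le> real (N k)" for k
    by (meson of_nat_0_le_iff order_trans)
  then show "z \<in> closed_domain" by (simp add: mem_ent_box comp_closure_def)
qed

lemma mesh_ent_within:
  assumes "E \<in> M" "X \<in> M" "v \<in> ent_set X" "v \<in> ent_box E"
  shows "fst (E k) \<le> fst (X k) \<and> snd (X k) \<le> snd (E k)"
proof -
  have "ent_set X \<subseteq> ent_box E" using meets_box_subset[OF assms(1,2)] assms(3,4) by blast
  then have "comp_set (X k) \<subseteq> comp_closure (E k)"
    using ent_set_subset_boxD comp_le[OF assms(2)] by blast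
  then show ?thesis using comp_set_subset_closure_iff comp_le[OF assms(2)] by blast
qed

lemma finite_mesh: "finite M"
proof (rule finite_subset)
  show "M \<subseteq> Pi UNIV (\<lambda>k. {0..N k} \<times> {0..N k})"
  proof
    fix E assume "E \<in> M"
    then have "E k \<in> {0..N k} \<times> {0..N k}" for k
      using comp_le[of E k] comp_le_N[of E k] by (cases "E k") auto
    then show "E \<in> Pi UNIV (\<lambda>k. {0..N k} \<times> {0..N k})" by (simp add: Pi_def)
  qed
  show "finite (Pi UNIV (\<lambda>k. {0..N k} \<times> {0..N k}))"
    using finite_PiE[of UNIV "\<lambda>k. {0..N k} \<times> {0..N k}"] by (simp add: PiE_UNIV_domain)
qed

lemma mem_skel:
  "z \<in> skel M i \<longleftrightarrow> (\<exists>Q\<in>M. is_cell Q \<and> z \<in> ent_box Q \<and> z$i \<in> {real (fst (Q i)), real (snd (Q i))})"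
  unfolding skel_def using closure_mesh_ent by auto

lemma skel_subset_domain: "skel M i \<subseteq> closed_domain"
  using mem_skel mesh_ent_box_subset_domain by blast

lemma closed_skel: "closed (skel M i)"
  unfolding skel_def
proof (intro closed_UN ballI)
  show "finite {Q \<in> M. is_cell Q}" using finite_mesh by simp
  fix Q
  have "{z \<in> closure (ent_set Q). z$i \<in> {real (fst (Q i)), real (snd (Q i))}}
    = closure (ent_set Q) \<inter> ({z. z$i = real (fst (Q i))} \<union> {z. z$i = real (snd (Q i))})" by blast
  moreover have "closed {z::real^'n. z$i = a}" for a
    by (intro closed_Collect_eq continuous_on_const continuous_on_component continuous_on_id)
  ultimately show "closed {z \<in> closure (ent_set Q). z$i \<in> {real (fst (Q i)), real (snd (Q i))}}"
    by (simp add: closed_Int closed_Un)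
qed

end

section \<open>Generic points and two-dimensional slices\<close>

definition sep_radius :: "real^'n \<Rightarrow> real \<Rightarrow> bool" where
  "sep_radius z \<rho> \<longleftrightarrow> 0 < \<rho> \<and> (\<forall>k. \<forall>m::nat. real m \<noteq> z$k \<longrightarrow> \<rho> \<le> \<bar>real m - z$k\<bar>)"

lemma nat_dist_gap: "\<exists>\<delta>>0. \<forall>m::nat. real m \<noteq> v \<longrightarrow> \<delta> \<le> \<bar>real m - v\<bar>"
proof -
  define F where "F = {m::nat. real m \<noteq> v \<and> real m < v + 1}"
  have "F \<subseteq> {..nat \<lceil>v + 1\<rceil>}"
    by (auto simp: F_def) linarith
  then have "finite F" by (rule finite_subset) simp
  define \<delta> where "\<delta> = Min (insert 1 ((\<lambda>m. \<bar>real m - v\<bar>) ` F))"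
  have "0 < \<delta>" using \<open>finite F\<close> by (auto simp: \<delta>_def F_def)
  moreover have "\<delta> \<le> \<bar>real m - v\<bar>" if "real m \<noteq> v" for m
  proof (cases "m \<in> F")
    case True
    then show ?thesis using \<open>finite F\<close> by (simp add: \<delta>_def)
  next
    case False
    then have "1 \<le> \<bar>real m - v\<bar>" using that by (auto simp: F_def)
    moreover have "\<delta> \<le> 1" using \<open>finite F\<close> by (simp add: \<delta>_def)
    ultimately show ?thesis by linarith
  qed
  ultimately show ?thesis by blast
qed

lemma sep_radius_exists: "\<exists>\<rho>. sep_radius (z::real^'n::finite) \<rho>"
proof -
  have "\<forall>k. \<exists>\<delta>>0. \<forall>m::nat. real m \<noteq> z$k \<longrightarrow> \<delta> \<le> \<bar>real m - z$k\<bar>"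
    using nat_dist_gap by blast
  then obtain \<delta> where \<delta>: "\<And>k. 0 < \<delta> k" "\<And>k m. real m \<noteq> z$k \<Longrightarrow> \<delta> k \<le> \<bar>real m - z$k\<bar>"
    by metis
  have le: "Min (range \<delta>) \<le> \<delta> k" for k by simp
  have "0 < Min (range \<delta>)" using \<delta>(1) by simp
  then have "sep_radius z (Min (range \<delta>))"
    unfolding sep_radius_def using \<delta>(2) le by (meson order_trans)
  then show ?thesis by blast
qed

lemma sep_radius_not_nat: "sep_radius z \<rho> \<Longrightarrow> 0 < \<bar>v - z$k\<bar> \<Longrightarrow> \<bar>v - z$k\<bar> < \<rho> \<Longrightarrow> v \<notin> \<nat>"
  unfolding sep_radius_def by (force elim: Nats_cases)

lemma sep_radius_nat_eq: "sep_radius z \<rho> \<Longrightarrow> \<bar>real m - z$k\<bar> < \<rho> \<Longrightarrow> real m = z$k"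
  unfolding sep_radius_def by force

lemma sep_radius_closure:
  assumes "sep_radius z \<rho>" "v \<in> comp_set x" "\<bar>v - z$k\<bar> < \<rho>"
  shows "z$k \<in> comp_closure x"
proof -
  have "real (fst x) \<le> v" "v \<le> real (snd x)"
    using assms(2) by (auto simp: comp_set_def split: if_splits)
  moreover have "\<bar>real m - z$k\<bar> < \<rho> \<Longrightarrow> real m = z$k" for m using sep_radius_nat_eq[OF assms(1)] .
  ultimately have "real (fst x) \<le> z$k" "z$k \<le> real (snd x)"
    using assms(3) by (smt (verit))+
  then show ?thesis by (simp add: comp_closure_def)
qed

definition plane_pt :: "real^'n \<Rightarrow> 'n \<Rightarrow> 'n \<Rightarrow> real \<Rightarrow> real \<Rightarrow> real^'n" where
  "plane_pt p i j a b = (\<chi> k. if k = i then a else if k = j then b else p$k)"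

definition meets_slice :: "real^'n \<Rightarrow> 'n \<Rightarrow> 'n \<Rightarrow> 'n entity \<Rightarrow> bool" where
  "meets_slice p i j E \<longleftrightarrow> (\<forall>k. k \<noteq> i \<longrightarrow> k \<noteq> j \<longrightarrow> p$k \<in> comp_set (E k))"

lemma plane_pt_nth [simp]: "plane_pt p i j a b $ k = (if k = i then a else if k = j then b else p$k)"
  by (simp add: plane_pt_def)

lemma mem_ent_set_plane_pt:
  "i \<noteq> j \<Longrightarrow> meets_slice p i j E \<Longrightarrow>
    plane_pt p i j a b \<in> ent_set E \<longleftrightarrow> a \<in> comp_set (E i) \<and> b \<in> comp_set (E j)"
  unfolding meets_slice_def mem_ent_set by (metis plane_pt_nth)

lemma meets_slice_if_box:
  assumes "\<forall>k. fst (E k) \<le> snd (E k)" "\<forall>k. k \<noteq> i \<longrightarrow> k \<noteq> j \<longrightarrow> p$k \<notin> \<nat>"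
    and "plane_pt p i j a b \<in> ent_box E"
  shows "meets_slice p i j E"
  unfolding meets_slice_def
proof (intro allI impI)
  fix k assume "k \<noteq> i" "k \<noteq> j"
  then show "p$k \<in> comp_set (E k)"
    using assms comp_set_if_not_nat[of "E k" "p$k"] by (simp add: mem_ent_box) (metis plane_pt_nth)
qed

lemma meets_slice_interval:
  "meets_slice p i j E \<Longrightarrow> k \<noteq> i \<Longrightarrow> k \<noteq> j \<Longrightarrow> p$k \<notin> \<nat> \<Longrightarrow> fst (E k) < snd (E k)"
  unfolding meets_slice_def using comp_set_interval_if_not_nat by blast

lemma edim_meets_slice:
  assumes "2 \<le> CARD('n)" "i \<noteq> j" "\<forall>k. k \<noteq> i \<longrightarrow> k \<noteq> j \<longrightarrow> fst (E k) < snd (E k)"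
  shows "edim (E :: 'n::finite entity) = CARD('n) - 2 + card ({i, j} \<inter> {k. fst (E k) < snd (E k)})"
proof -
  have "{k. fst (E k) < snd (E k)} = (UNIV - {i, j}) \<union> ({i, j} \<inter> {k. fst (E k) < snd (E k)})"
    using assms(3) by blast
  moreover have "card (UNIV - {i, j} :: 'n set) = CARD('n) - 2"
    using assms(2) by (simp add: card_Diff_subset)
  moreover have "(UNIV - {i, j}) \<inter> ({i, j} \<inter> {k. fst (E k) < snd (E k)}) = {}" by blast
  ultimately have
    "edim E = card (UNIV - {i, j} :: 'n set) + card ({i, j} \<inter> {k. fst (E k) < snd (E k)})"
    unfolding edim_def by (metis card_Un_disjoint finite)
  then show ?thesis using \<open>card (UNIV - {i, j}) = _\<close> by simp
qed

context mesh_complex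
begin

lemma mesh_ent_in_frontier:
  assumes "E \<in> M" "is_cell E" "X \<in> M" "X \<noteq> E" "ent_set X \<inter> ent_box E \<noteq> {}"
  shows "ent_set X \<subseteq> frontier (ent_set E)"
  using meets_box_subset[OF assms(1,3,5)] disjoint[OF assms(3,1,4)]
  by (auto simp: frontier_def closure_mesh_ent[OF assms(1)]
      interior_open[OF open_ent_set[OF assms(2)]])

lemma mesh_comp_at_boundary:
  assumes "Q \<in> M" "X \<in> M" "ent_set X \<inter> ent_box Q \<noteq> {}" "real c \<in> comp_set (X k)"
    and "c = fst (Q k) \<or> c = snd (Q k)"
  shows "X k = (c, c)"
proof (rule ccontr)
  assume "X k \<noteq> (c, c)"
  then have "fst (X k) < snd (X k)"
    using point_comp_eq[OF _ assms(4)] comp_le[OF assms(2), of k] le_neq_implies_less by blast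
  then have "fst (X k) < c \<and> c < snd (X k)" by (rule nat_in_interval_comp[OF _ assms(4)])
  moreover have "fst (Q k) \<le> fst (X k) \<and> snd (X k) \<le> snd (Q k)"
    using mesh_ent_within[OF assms(1,2)] assms(3) by blast
  ultimately show False using assms(5) by linarith
qed

text \<open>Shifting \<open>w\<close> by half a unit in direction \<open>i\<close> gives a point off all grid hyperplanes; the
  cell containing it has \<open>w\<close> in its closure.\<close>
lemma cell_box_through:
  assumes N_pos: "\<forall>k. 1 \<le> N k" and w: "w \<in> closed_domain"
    and generic: "\<forall>k. k \<noteq> i \<longrightarrow> w$k \<notin> \<nat>" and wi: "w$i = real c"
  obtains F where "F \<in> M" "is_cell F" "w \<in> ent_box F" "\<forall>k. k \<noteq> i \<longrightarrow> w$k \<in> comp_set (F k)"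
proof -
  have "w$i \<le> real (N i)" using w by (simp add: mem_ent_box comp_closure_def)
  then have "c \<le> N i" using wi by simp
  define h :: real where "h = (if c < N i then 1/2 else -1/2)"
  define w' where "w' = (\<chi> k. if k = i then real c + h else w$k)"
  have "0 \<le> real c + h \<and> real c + h \<le> real (N i)"
    using \<open>c \<le> N i\<close> N_pos[rule_format, of i] by (auto simp: h_def)
  then have "w' \<in> closed_domain" using w by (auto simp: w'_def mem_ent_box comp_closure_def)
  then obtain F where F: "F \<in> M" "w' \<in> ent_set F" using covers by blast
  have h: "\<bar>h\<bar> = 1/2" by (simp add: h_def)
  have F_i: "real c + h \<in> comp_set (F i)"
    using F(2)[unfolded mem_ent_set, rule_format, of i] by (simp add: w'_def)
  have F_k: "w$k \<in> comp_set (F k)" if "k \<noteq> i" for k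
    using F(2)[unfolded mem_ent_set, rule_format, of k] that by (simp add: w'_def)
  have "fst (F k) < snd (F k)" for k
  proof (cases "k = i")
    case True
    then show ?thesis using F_i half_step_not_nat[OF h] comp_set_interval_if_not_nat by blast
  next
    case False
    then show ?thesis using F_k[OF False] generic comp_set_interval_if_not_nat by blast
  qed
  then have "is_cell F" by (simp add: is_cell_def)
  have "w$k \<in> comp_closure (F k)" for k
  proof (cases "k = i")
    case True
    then show ?thesis using comp_closure_if_step[OF F_i] h wi by simp
  next
    case False
    then show ?thesis using F_k[OF False] comp_set_subset_closure comp_le[OF F(1)] by blast
  qed
  then have "w \<in> ent_box F" by (simp add: mem_ent_box)
  then show ?thesis using that F(1) \<open>is_cell F\<close> F_k by blast
qed

lemma cell_across_skeleton:
  assumes N_pos: "\<forall>k. 1 \<le> N k" and w: "w \<in> closed_domain" "w \<notin> skel M i"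
    and generic: "\<forall>k. k \<noteq> i \<longrightarrow> w$k \<notin> \<nat>" and wi: "w$i = real c"
  shows "\<exists>Q\<in>M. is_cell Q \<and> w \<in> ent_set Q \<and> fst (Q i) < c \<and> c < snd (Q i)"
proof -
  obtain E where E: "E \<in> M" "w \<in> ent_set E" using covers w(1) by blast
  have E_int: "fst (E k) < snd (E k)" if "k \<noteq> i" for k
    using E(2) generic that comp_set_interval_if_not_nat[of "w$k" "E k"] by (simp add: mem_ent_set)
  show ?thesis
  proof (cases "fst (E i) < snd (E i)")
    case True
    then have "is_cell E" unfolding is_cell_def using E_int by metis
    moreover have "fst (E i) < c \<and> c < snd (E i)"
      using nat_in_interval_comp[OF True] E(2) wi by (metis mem_ent_set)
    ultimately show ?thesis using E by blast
  next
    case False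
    obtain F where F: "F \<in> M" "is_cell F" "w \<in> ent_box F" "\<forall>k. k \<noteq> i \<longrightarrow> w$k \<in> comp_set (F k)"
      using cell_box_through[OF N_pos w(1) generic wi] by blast
    show ?thesis
    proof (cases "real c \<in> comp_set (F i)")
      case True
      then have "w \<in> ent_set F" using F(4) wi unfolding mem_ent_set by metis
      then have "F = E" using mesh_ent_unique F(1) E by blast
      then show ?thesis using False F(2) by (simp add: is_cell_def)
    next
      case False
      then have "c = fst (F i) \<or> c = snd (F i)"
        using nat_in_closure_not_comp comp_le[OF F(1)] F(3) wi by (metis mem_ent_box)
      then have "w \<in> skel M i" using mem_skel F(1-3) wi by auto
      then show ?thesis using w(2) by blast
    qed
  qed
qed

end

section \<open>T-junctions in a slice\<close>

text \<open>The configuration found near a point where a path leaves the skeleton: in the slice through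
  \<open>p\<close> spanned by the directions \<open>i\<close> and \<open>j\<close>, the cell \<open>Qa\<close> crosses the line \<open>x\<^sub>i = c\<close> and has
  the vertex \<open>(c, zj)\<close> on its \<open>j\<close>-side, while the cell \<open>Qb\<close> on the other side of \<open>x\<^sub>j = zj\<close> ends
  at \<open>x\<^sub>i = c\<close>. The entity \<open>T\<close> through the vertex is then a T-junction with associated cell \<open>Qa\<close>.\<close>
locale junction_site = mesh_complex N G M
  for N :: "'n::finite \<Rightarrow> nat" and G M +
  fixes p :: "real^'n" and i j :: 'n and c zj :: nat and h :: real and Qa Qb T :: "'n entity"
  assumes two_dims: "2 \<le> CARD('n)" and ij: "i \<noteq> j"
    and generic: "k \<noteq> i \<Longrightarrow> k \<noteq> j \<Longrightarrow> p$k \<notin> \<nat>"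
    and h: "\<bar>h\<bar> = 1/2"
    and Qa: "Qa \<in> M" "is_cell Qa" "fst (Qa i) < c" "c < snd (Qa i)"
      "zj = fst (Qa j) \<or> zj = snd (Qa j)" "plane_pt p i j (real c) (real zj + h) \<in> ent_set Qa"
    and Qb: "Qb \<in> M" "is_cell Qb" "c = fst (Qb i) \<or> c = snd (Qb i)"
      "zj = fst (Qb j) \<or> zj = snd (Qb j)" "plane_pt p i j (real c) (real zj - h) \<in> ent_box Qb"
    and T: "T \<in> M" "plane_pt p i j (real c) (real zj) \<in> ent_set T"
begin

abbreviation pt :: "real \<Rightarrow> real \<Rightarrow> real^'n" where
  "pt \<equiv> plane_pt p i j"

lemma meets_slice_box: "E \<in> M \<Longrightarrow> pt a b \<in> ent_box E \<Longrightarrow> meets_slice p i j E"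
  using meets_slice_if_box comp_le generic by blast

lemma mem_ent_set_pt:
  "meets_slice p i j E \<Longrightarrow> pt a b \<in> ent_set E \<longleftrightarrow> a \<in> comp_set (E i) \<and> b \<in> comp_set (E j)"
  using mem_ent_set_plane_pt ij by blast

lemma slice_interval: "meets_slice p i j E \<Longrightarrow> k \<noteq> i \<Longrightarrow> k \<noteq> j \<Longrightarrow> fst (E k) < snd (E k)"
  using meets_slice_interval generic by blast

lemma pt_mem_box: "E \<in> M \<Longrightarrow> pt a b \<in> ent_set E \<Longrightarrow> pt a b \<in> ent_box E"
  using ent_set_subset_box comp_le by blast

lemma Qa_slice: "meets_slice p i j Qa"
  using meets_slice_box Qa(1,6) pt_mem_box by blast

lemma Qb_slice: "meets_slice p i j Qb"
  using meets_slice_box Qb(1,5) by blast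

lemma Qb_j: "real zj - h \<in> comp_set (Qb j)"
proof -
  have "real zj - h \<in> comp_closure (Qb j)"
    using Qb(5)[unfolded mem_ent_box, rule_format, of j] ij by simp
  moreover have "real zj - h \<notin> \<nat>" using half_step_not_nat[of "-h" zj] h by simp
  ultimately show ?thesis using comp_set_if_not_nat comp_le[OF Qb(1)] by blast
qed

lemma T_slice: "meets_slice p i j T"
  using meets_slice_box T pt_mem_box by blast

lemma junction_in_box:
  assumes "Q \<in> M" "meets_slice p i j Q" "real c \<in> comp_closure (Q i)"
    "zj = fst (Q j) \<or> zj = snd (Q j)"
  shows "pt (real c) (real zj) \<in> ent_box Q"
proof -
  have "pt (real c) (real zj) $ k \<in> comp_closure (Q k)" for k
    using assms comp_set_subset_closure[of "Q k"] comp_le[of Q k] unfolding meets_slice_def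
    by (auto simp: comp_closure_def)
  then show ?thesis by (simp add: mem_ent_box)
qed

lemma T_i: "T i = (c, c)"
proof (rule mesh_comp_at_boundary[OF Qb(1) T(1) _ _ Qb(3)])
  have "real c \<in> comp_closure (Qb i)" using Qb(5)[unfolded mem_ent_box, rule_format, of i] by simp
  then show "ent_set T \<inter> ent_box Qb \<noteq> {}"
    using T(2) junction_in_box[OF Qb(1) Qb_slice _ Qb(4)] by blast
  show "real c \<in> comp_set (T i)" using T(2) by (simp add: mem_ent_set_pt[OF T_slice])
qed

lemma T_j: "T j = (zj, zj)"
proof (rule mesh_comp_at_boundary[OF Qa(1) T(1) _ _ Qa(5)])
  have "real c \<in> comp_closure (Qa i)" using Qa(3,4) by (simp add: comp_closure_def)
  then show "ent_set T \<inter> ent_box Qa \<noteq> {}"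
    using T(2) junction_in_box[OF Qa(1) Qa_slice _ Qa(5)] by blast
  show "real zj \<in> comp_set (T j)" using T(2) by (simp add: mem_ent_set_pt[OF T_slice])
qed

lemma edim_T: "edim T = CARD('n) - 2"
proof -
  have "{i, j} \<inter> {k. fst (T k) < snd (T k)} = {}" using T_i T_j by auto
  then show ?thesis using edim_meets_slice[OF two_dims ij] slice_interval[OF T_slice] by simp
qed

lemma junction_closure_near:
  assumes "sep_radius z \<rho>" "z$i = real c" "z$j = real zj"
    and "\<forall>k. k \<noteq> i \<longrightarrow> k \<noteq> j \<longrightarrow> \<bar>p$k - z$k\<bar> < \<rho>"
  shows "z \<in> closure (ent_set T)"
proof -
  have "z$k \<in> comp_closure (T k)" for k
  proof -
    consider "k = i" | "k = j" | "k \<noteq> i" "k \<noteq> j" by blast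
    then show ?thesis
    proof cases
      case 3
      then have "p$k \<in> comp_set (T k)" using T_slice by (simp add: meets_slice_def)
      then show ?thesis using sep_radius_closure assms(1,4) 3 by blast
    qed (use T_i T_j assms(2,3) in \<open>simp_all add: comp_closure_def\<close>)
  qed
  then show ?thesis by (simp add: mem_ent_box closure_mesh_ent[OF T(1)])
qed

lemma junction_in_Omega: "pt (real c) (real zj) \<in> Omega N"
proof -
  have "0 < pt (real c) (real zj) $ k \<and> pt (real c) (real zj) $ k < real (N k)" for k
  proof -
    consider "k = i" | "k = j" | "k \<noteq> i" "k \<noteq> j" by blast
    then show ?thesis
    proof cases
      case 1
      then show ?thesis using Qa(3,4) comp_le_N[OF Qa(1), of i] by simp
    next
      case 2
      have "real zj + h \<in> comp_set (Qa j)" using Qa(6) by (simp add: mem_ent_set_pt[OF Qa_slice])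
      then have "real (fst (Qa j)) < real zj + h" "real zj + h < real (snd (Qa j))"
        using is_cellD[OF Qa(2), of j] by (simp_all add: comp_set_def)
      moreover have "real (fst (Qb j)) \<le> real zj - h" "real zj - h \<le> real (snd (Qb j))"
        using Qb(5)[unfolded mem_ent_box, rule_format, of j] ij by (simp_all add: comp_closure_def)
      moreover have "real (snd (Qa j)) \<le> real (N j)" "real (snd (Qb j)) \<le> real (N j)"
        using comp_le_N Qa(1) Qb(1) by simp_all
      moreover have "h = 1/2 \<or> h = -1/2" using h by linarith
      ultimately have "1/2 \<le> real zj \<and> real zj + 1/2 \<le> real (N j)"
        using of_nat_0_le_iff[of "fst (Qa j)"] of_nat_0_le_iff[of "fst (Qb j)"]
          by (elim disjE) linarith+
      then have "0 < real zj \<and> real zj < real (N j)" by linarith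
      then show ?thesis using 2 ij by simp
    next
      case 3
      then have "p$k \<in> comp_set (T k)" using T_slice by (simp add: meets_slice_def)
      then have "real (fst (T k)) \<le> p$k" "p$k \<le> real (snd (T k))"
        using comp_set_subset_closure[OF comp_le[OF T(1)], of k] by (auto simp: comp_closure_def)
      moreover have "real (snd (T k)) \<le> real (N k)" using comp_le_N[OF T(1)] by simp
      ultimately have "0 \<le> p$k \<and> p$k \<le> real (N k)" using of_nat_0_le_iff[of "fst (T k)"] by linarith
      moreover have "p$k \<noteq> 0" "p$k \<noteq> real (N k)" using generic[OF 3] by auto
      ultimately show ?thesis using 3 by simp
    qed
  qed
  then show ?thesis by (simp add: Omega_def)
qed

lemma T_not_boundary: "\<not> ent_set T \<subseteq> frontier (Omega N)"
  using T(2) junction_in_Omega interior_open[OF open_Omega] by (auto simp: frontier_def)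

text \<open>In the slice, a face with \<open>T\<close> in its boundary is an edge leaving the vertex \<open>(c, zj)\<close>;
  the edge towards \<open>Qa\<close> does not exist, since that direction lies inside the cell \<open>Qa\<close>.\<close>
lemma face_witness:
  assumes F: "F \<in> M" "edim F = CARD('n) - 1" "ent_set T \<subseteq> rel_frontier (ent_set F)"
  shows "pt (real c) (real zj - h) \<in> ent_set F \<or> pt (real c + 1/2) (real zj) \<in> ent_set F
    \<or> pt (real c - 1/2) (real zj) \<in> ent_set F"
proof -
  have "pt (real c) (real zj) \<in> ent_box F"
    using F(3) T(2) closure_mesh_ent[OF F(1)] by (auto simp: rel_frontier_def)
  then have slice: "meets_slice p i j F" and c_F: "real c \<in> comp_closure (F i)"
    and zj_F: "real zj \<in> comp_closure (F j)"
    using meets_slice_box[OF F(1)] ij by (auto simp: mem_ent_box dest: spec[of _ i] spec[of _ j])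
  have "F \<noteq> T" using F(2) edim_T two_dims by auto
  then have not_T: "pt (real c) (real zj) \<notin> ent_set F" using mesh_ent_unique F(1) T by blast
  have "card ({i, j} \<inter> {k. fst (F k) < snd (F k)}) = 1"
    using F(2) edim_meets_slice[OF two_dims ij] slice_interval[OF slice] two_dims by simp
  then consider "fst (F i) = snd (F i)" "fst (F j) < snd (F j)" | "fst (F i) < snd (F i)"
    "fst (F j) = snd (F j)"
    using comp_le[OF F(1), of i] comp_le[OF F(1), of j] ij by (fastforce simp: card_1_singleton_iff)
  then show ?thesis
  proof cases
    case 1
    then have c_in: "real c \<in> comp_set (F i)" using c_F by (simp add: comp_set_def comp_closure_def)
    then have "real zj \<notin> comp_set (F j)" using not_T by (simp add: mem_ent_set_pt[OF slice])
    then have "zj = fst (F j) \<or> zj = snd (F j)"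
      using nat_in_closure_not_comp comp_le[OF F(1)] zj_F by blast
    then have "real zj + h \<in> comp_set (F j) \<or> real zj - h \<in> comp_set (F j)"
      using comp_set_endpoint_step[OF 1(2)] h by simp
    moreover have "real zj + h \<notin> comp_set (F j)"
    proof
      assume "real zj + h \<in> comp_set (F j)"
      then have "pt (real c) (real zj + h) \<in> ent_set F"
        using c_in by (simp add: mem_ent_set_pt[OF slice])
      then have "F = Qa" using mesh_ent_unique F(1) Qa(1,6) by blast
      then show False using 1 is_cellD[OF Qa(2), of i] by simp
    qed
    ultimately show ?thesis using c_in by (simp add: mem_ent_set_pt[OF slice])
  next
    case 2
    then have zj_in: "real zj \<in> comp_set (F j)"
      using zj_F by (simp add: comp_set_def comp_closure_def)
    then have "real c \<notin> comp_set (F i)" using not_T by (simp add: mem_ent_set_pt[OF slice])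
    then have "c = fst (F i) \<or> c = snd (F i)"
      using nat_in_closure_not_comp comp_le[OF F(1)] c_F by blast
    then have "real c + 1/2 \<in> comp_set (F i) \<or> real c - 1/2 \<in> comp_set (F i)"
      using comp_set_endpoint_step[OF 2(1), of c "1/2"] by simp
    then show ?thesis using zj_in by (auto simp: mem_ent_set_pt[OF slice])
  qed
qed

lemma card_faces_T:
  "card {F \<in> M. edim F = CARD('n) - 1 \<and> ent_set T \<subseteq> rel_frontier (ent_set F)} < 4"
  (is "card ?faces < 4")
proof -
  define W where
    "W = {pt (real c) (real zj - h), pt (real c + 1/2) (real zj), pt (real c - 1/2) (real zj)}"
  define owner where "owner w = (THE F. F \<in> M \<and> w \<in> ent_set F)" for w
  have "?faces \<subseteq> owner ` W"
  proof
    fix F assume "F \<in> ?faces"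
    then obtain w where "w \<in> W" "w \<in> ent_set F" "F \<in> M" using face_witness by (auto simp: W_def)
    moreover have "owner w = F"
      unfolding owner_def using calculation mesh_ent_unique by blast
    ultimately show "F \<in> owner ` W" by blast
  qed
  then have "card ?faces \<le> card (owner ` W)" by (intro card_mono) (auto simp: W_def)
  also have "\<dots> \<le> card W" by (rule card_image_le) (simp add: W_def)
  also have "\<dots> \<le> 3" by (auto simp: W_def card_insert_if)
  finally show ?thesis by simp
qed

lemma is_tjunction_T: "is_tjunction N M T"
  unfolding is_tjunction_def using T(1) edim_T T_not_boundary card_faces_T by blast

lemma assoc_cell_Qa: "assoc_cell M T Qa i j"
proof -
  have "T \<noteq> Qa" using T_i is_cellD[OF Qa(2), of i] by auto
  moreover have "pt (real c) (real zj) \<in> ent_box Qa"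
    using junction_in_box[OF Qa(1) Qa_slice _ Qa(5)] Qa(3,4) by (simp add: comp_closure_def)
  ultimately have "ent_set T \<subseteq> frontier (ent_set Qa)"
    using mesh_ent_in_frontier[OF Qa(1,2) T(1)] T(2) by blast
  then show ?thesis
    unfolding assoc_cell_def using Qa T_i T_j ij by (auto simp: comp_set_def)
qed

lemma slice_cells_eq:
  assumes "E \<in> M" "E' \<in> M" "meets_slice p i j E" "meets_slice p i j E'"
    and "a \<in> comp_set (E i)" "a \<in> comp_set (E' i)" "b \<in> comp_set (E j)" "b \<in> comp_set (E' j)"
  shows "E = E'"
  using mesh_ent_unique[of E E' "pt a b"] assms by (simp add: mem_ent_set_pt)

lemma assoc_cell_dirs:
  assumes "assoc_cell M T Q i' j'"
  shows "meets_slice p i j Q" "(i' = i \<and> j' = j) \<or> (i' = j \<and> j' = i)"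
proof -
  have Q: "Q \<in> M" "i' \<noteq> j'" "fst (T i') = snd (T i')" "fst (T j') = snd (T j')"
    "ent_set T \<subseteq> frontier (ent_set Q)"
    using assms by (auto simp: assoc_cell_def)
  have "pt (real c) (real zj) \<in> ent_box Q"
    using Q(5) T(2) closure_mesh_ent[OF Q(1)] by (auto simp: frontier_def)
  then show "meets_slice p i j Q" using meets_slice_box[OF Q(1)] by blast
  have "i' \<in> {i, j}" "j' \<in> {i, j}" using Q(3,4) slice_interval[OF T_slice] by fastforce+
  then show "(i' = i \<and> j' = j) \<or> (i' = j \<and> j' = i)" using Q(2) by blast
qed

lemma assoc_cell_ij: "assoc_cell M T Q i j \<Longrightarrow> Q = Qa"
proof -
  assume assoc: "assoc_cell M T Q i j"
  then have Q: "Q \<in> M" "is_cell Q" "real c \<in> comp_set (Q i)" "zj = fst (Q j) \<or> zj = snd (Q j)"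
    using T_i T_j by (auto simp: assoc_cell_def)
  note slice = assoc_cell_dirs(1)[OF assoc]
  have c_Q: "fst (Q i) < c \<and> c < snd (Q i)"
    by (rule nat_in_interval_comp[OF is_cellD[OF Q(2)] Q(3)])
  have "real zj + h \<in> comp_set (Q j) \<or> real zj - h \<in> comp_set (Q j)"
    using comp_set_endpoint_step[OF is_cellD[OF Q(2)] Q(4)] h by simp
  then show "Q = Qa"
  proof
    assume "real zj + h \<in> comp_set (Q j)"
    moreover have "real c \<in> comp_set (Qa i)" "real zj + h \<in> comp_set (Qa j)"
      using Qa(3,4,6) is_cellD[OF Qa(2)] by (auto simp: comp_set_def mem_ent_set_pt[OF Qa_slice])
    ultimately show ?thesis using slice_cells_eq[OF Q(1) Qa(1) slice Qa_slice] Q(3) by blast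
  next
    assume zQ: "real zj - h \<in> comp_set (Q j)"
    obtain a where "real c + a \<in> comp_set (Qb i)" "real c + a \<in> comp_set (Q i)"
      using common_half_step[OF is_cellD[OF Qb(2)] Qb(3)] c_Q by blast
    then have "Q = Qb" using slice_cells_eq[OF Q(1) Qb(1) slice Qb_slice] zQ Qb_j by blast
    then show ?thesis using c_Q Qb(3) by auto
  qed
qed

lemma not_assoc_cell_ji: "\<not> assoc_cell M T Q j i"
proof
  assume assoc: "assoc_cell M T Q j i"
  then have Q: "Q \<in> M" "is_cell Q" "real zj \<in> comp_set (Q j)" "c = fst (Q i) \<or> c = snd (Q i)"
    using T_i T_j by (auto simp: assoc_cell_def)
  have zj_Q: "fst (Q j) < zj \<and> zj < snd (Q j)"
    by (rule nat_in_interval_comp[OF is_cellD[OF Q(2)] Q(3)])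
  obtain a where "real c + a \<in> comp_set (Q i)" "real c + a \<in> comp_set (Qa i)"
    using common_half_step[OF is_cellD[OF Q(2)] Q(4)] Qa(3,4) by blast
  moreover have "real zj + h \<in> comp_set (Q j)" using comp_set_inner_step zj_Q h by simp
  moreover have "real zj + h \<in> comp_set (Qa j)"
    using Qa(6) by (simp add: mem_ent_set_pt[OF Qa_slice])
  ultimately have "Q = Qa"
    using slice_cells_eq[OF Q(1) Qa(1) assoc_cell_dirs(1)[OF assoc] Qa_slice] by blast
  then show False using Q(4) Qa(3,4) by auto
qed

lemma assoc_cell_unique: "assoc_cell M T Q i' j' \<Longrightarrow> (Q, i', j') = (Qa, i, j)"
  using assoc_cell_dirs(2) assoc_cell_ij not_assoc_cell_ji by blast

lemma ascell_data_T: "ascell_data M T = (Qa, i, j)"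
  unfolding ascell_data_def
proof (rule the_equality)
  show "assoc_cell M T (fst (Qa, i, j)) (fst (snd (Qa, i, j))) (snd (snd (Qa, i, j)))"
    using assoc_cell_Qa by simp
  fix d assume "assoc_cell M T (fst d) (fst (snd d)) (snd (snd d))"
  then show "d = (Qa, i, j)" using assoc_cell_unique by (metis prod.collapse)
qed

end

section \<open>Leaving the skeleton along a segment\<close>

lemma finite_pos_lower_bound:
  fixes S :: "real set"
  assumes "finite S" "\<forall>s\<in>S. 0 < s"
  obtains \<tau> where "0 < \<tau>" "\<forall>s\<in>S. \<tau> < s"
proof -
  have "0 < Min (insert 1 S)" "\<forall>s\<in>S. Min (insert 1 S) \<le> s" using assms by simp_all
  then show ?thesis using that[of "Min (insert 1 S) / 2"] by force
qed

lemma last_point_in_closed: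
  fixes x y :: "'a::real_normed_vector"
  assumes "closed S" "x \<in> S" "y \<notin> S"
  obtains t where "0 \<le> t" "t < 1" "x + t *\<^sub>R (y - x) \<in> S"
    "\<And>u. t < u \<Longrightarrow> u \<le> 1 \<Longrightarrow> x + u *\<^sub>R (y - x) \<notin> S"
proof -
  define f where "f u = x + u *\<^sub>R (y - x)" for u :: real
  define U where "U = {0..1} \<inter> f -` S"
  have "continuous (at u) f" for u unfolding f_def by (intro continuous_intros)
  then have "closed (f -` S)" using continuous_closed_vimage[OF assms(1)] by blast
  then have "compact U" unfolding U_def by (intro compact_Int_closed) auto
  moreover have "0 \<in> U" using assms(2) by (simp add: U_def f_def)
  ultimately obtain t where t: "t \<in> U" "\<forall>u\<in>U. u \<le> t"
    using compact_attains_sup[of U] by blast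
  have "f t \<in> S" "0 \<le> t" "t \<le> 1" using t(1) by (simp_all add: U_def)
  moreover have "f 1 = y" by (simp add: f_def)
  ultimately have "t < 1" using assms(3) by (metis order_le_less)
  show ?thesis
  proof (rule that[of t])
    show "0 \<le> t" "t < 1" "x + t *\<^sub>R (y - x) \<in> S"
      using \<open>f t \<in> S\<close> \<open>0 \<le> t\<close> \<open>t < 1\<close> by (simp_all add: f_def)
    fix u assume "t < u" "u \<le> 1"
    then have "u \<notin> U" using t(2) by force
    then show "x + u *\<^sub>R (y - x) \<notin> S" using \<open>t < u\<close> \<open>u \<le> 1\<close> \<open>0 \<le> t\<close> by (simp add: U_def f_def)
  qed
qed

lemma comp_meets_segment:
  fixes u v t :: real
  assumes "fst x < snd x" "0 \<le> t" "t < 1" "u \<noteq> v"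
    and "u < v \<Longrightarrow> real (fst x) = (1 - t) * u + t * v" "v < u \<Longrightarrow> real (snd x) = (1 - t) * u + t * v"
  shows "comp_set x \<inter> convex hull {u, v} \<noteq> {}"
proof -
  define w where "w = (1 - t) * u + t * v"
  define \<epsilon> where "\<epsilon> = min (1/2) ((1 - t) * \<bar>v - u\<bar> / 2)"
  have \<epsilon>: "0 < \<epsilon>" "\<epsilon> < 1" "\<epsilon> < (1 - t) * \<bar>v - u\<bar>"
    using assms(3,4) by (auto simp: \<epsilon>_def min_def)
  have hull: "convex hull {u, v} = {min u v..max u v}"
    using closed_segment_eq_real_ivl[of u v] by (simp add: segment_convex_hull min_def max_def)
  have w: "v - w = (1 - t) * (v - u)" "w - u = t * (v - u)" by (simp_all add: w_def algebra_simps)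
  consider "u < v" | "v < u" using assms(4) by linarith
  then show ?thesis
  proof cases
    case 1
    have "w + \<epsilon> \<in> comp_set x" using assms(1,5) 1 \<epsilon>(1,2) by (simp add: comp_set_def w_def)
    moreover have "w + \<epsilon> \<in> convex hull {u, v}"
    proof -
      have "0 \<le> t * (v - u)" "\<epsilon> < (1 - t) * (v - u)" using 1 assms(2) \<epsilon>(3) by simp_all
      then have "u \<le> w + \<epsilon>" "w + \<epsilon> \<le> v" using w \<epsilon>(1) by linarith+
      then show ?thesis using 1 by (simp add: hull)
    qed
    ultimately show ?thesis by blast
  next
    case 2
    have "w - \<epsilon> \<in> comp_set x" using assms(1,6) 2 \<epsilon>(1,2) by (simp add: comp_set_def w_def)
    moreover have "w - \<epsilon> \<in> convex hull {u, v}"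
    proof -
      have a: "0 \<le> t * (u - v)" "\<epsilon> < (1 - t) * (u - v)" using 2 assms(2) \<epsilon>(3) by simp_all
      have b: "w - v = (1 - t) * (u - v)" "u - w = t * (u - v)" unfolding w_def
        by (simp_all add: algebra_simps)
      have "v \<le> w - \<epsilon>" using a(2) b(1) by linarith
      moreover have "w - \<epsilon> \<le> u" using a(1) b(2) \<epsilon>(1) by linarith
      ultimately have "v \<le> w - \<epsilon> \<and> w - \<epsilon> \<le> u" by blast
      then show ?thesis using 2 by (simp add: hull)
    qed
    ultimately show ?thesis by blast
  qed
qed

context mesh_complex
begin

lemma cells_at_skeleton_step:
  assumes N_pos: "\<forall>k. 1 \<le> N k" and ij: "i \<noteq> j"
    and p: "p \<in> skel M i" and q: "q \<notin> skel M i" "q \<in> closed_domain"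
    and step: "\<forall>k. k \<noteq> j \<longrightarrow> q$k = p$k"
    and generic: "\<forall>k. k \<noteq> i \<longrightarrow> k \<noteq> j \<longrightarrow> p$k \<notin> \<nat>" "q$j \<notin> \<nat>"
  obtains c Qa Qb where "Qa \<in> M" "is_cell Qa" "q \<in> ent_set Qa" "fst (Qa i) < c" "c < snd (Qa i)"
    "Qb \<in> M" "is_cell Qb" "p \<in> ent_box Qb" "c = fst (Qb i) \<or> c = snd (Qb i)" "p$i = real c"
    "comp_set (Qb j) \<inter> comp_set (Qa j) = {}"
proof -
  obtain Qb c where Qb: "Qb \<in> M" "is_cell Qb" "p \<in> ent_box Qb" "c = fst (Qb i) \<or> c = snd (Qb i)"
    "p$i = real c"
    using p by (auto simp: mem_skel)
  have "\<forall>k. k \<noteq> i \<longrightarrow> q$k \<notin> \<nat>" using generic step by metis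
  moreover have "q$i = real c" using step ij Qb(5) by simp
  ultimately obtain Qa where Qa: "Qa \<in> M" "is_cell Qa" "q \<in> ent_set Qa" "fst (Qa i) < c"
    "c < snd (Qa i)"
    using cell_across_skeleton[OF N_pos q(2,1)] by blast
  have "comp_set (Qb j) \<inter> comp_set (Qa j) = {}"
  proof (rule ccontr)
    assume "comp_set (Qb j) \<inter> comp_set (Qa j) \<noteq> {}"
    then obtain v where v: "v \<in> comp_set (Qb j)" "v \<in> comp_set (Qa j)" by blast
    obtain a where a: "real c + a \<in> comp_set (Qb i)" "real c + a \<in> comp_set (Qa i)"
      using common_half_step[OF _ Qb(4) Qa(4,5)] Qb(2) by (auto simp: is_cell_def)
    have "p$k \<in> comp_set (Qb k)" if "k \<noteq> i" "k \<noteq> j" for k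
      using Qb(3) generic that comp_set_if_not_nat comp_le[OF Qb(1)] by (simp add: mem_ent_box)
    moreover have "p$k \<in> comp_set (Qa k)" if "k \<noteq> i" "k \<noteq> j" for k
      using Qa(3) step that by (metis mem_ent_set)
    ultimately have "plane_pt p i j (real c + a) v \<in> ent_set Qb \<inter> ent_set Qa"
      using a v by (auto simp: mem_ent_set)
    then have "Qa = Qb" using mesh_ent_unique Qa(1) Qb(1) by blast
    then show False using Qa(4,5) Qb(4) by auto
  qed
  then show ?thesis using that Qa Qb by blast
qed

lemma junction_near_step:
  assumes two_dims: "2 \<le> CARD('n)" and N_pos: "\<forall>k. 1 \<le> N k"
    and rho: "sep_radius z \<rho>" and ij: "i \<noteq> j"
    and p: "p \<in> skel M i" "p$i = z$i" and q: "q \<notin> skel M i" "q \<in> closed_domain"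
    and step: "\<forall>k. k \<noteq> j \<longrightarrow> q$k = p$k" "p$j \<noteq> q$j"
    and near: "\<forall>k. k \<noteq> i \<longrightarrow> k \<noteq> j \<longrightarrow> 0 < \<bar>p$k - z$k\<bar> \<and> \<bar>p$k - z$k\<bar> < \<rho>"
      "\<bar>p$j - z$j\<bar> < \<rho>" "0 < \<bar>q$j - z$j\<bar>" "\<bar>q$j - z$j\<bar> < \<rho>"
  shows "\<exists>T Q. is_tjunction N M T \<and> ascell_data M T = (Q, i, j) \<and> z \<in> closure (ent_set T)
    \<and> is_cell Q \<and> (p$j < q$j \<longrightarrow> real (fst (Q j)) = z$j)
    \<and> (q$j < p$j \<longrightarrow> real (snd (Q j)) = z$j)"
proof -
  have generic: "\<forall>k. k \<noteq> i \<longrightarrow> k \<noteq> j \<longrightarrow> p$k \<notin> \<nat>" using near(1) sep_radius_not_nat[OF rho] by blast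
  obtain c Qa Qb where Qa: "Qa \<in> M" "is_cell Qa" "q \<in> ent_set Qa" "fst (Qa i) < c" "c < snd (Qa i)"
    and Qb: "Qb \<in> M" "is_cell Qb" "p \<in> ent_box Qb" "c = fst (Qb i) \<or> c = snd (Qb i)" "p$i = real c"
    and disj: "comp_set (Qb j) \<inter> comp_set (Qa j) = {}"
    using cells_at_skeleton_step[OF N_pos ij p(1) q step(1) generic
        sep_radius_not_nat[OF rho near(3,4)]] .
  have "q$j \<in> comp_set (Qa j)" "p$j \<in> comp_closure (Qb j)"
    using Qa(3) Qb(3) by (simp_all add: mem_ent_set mem_ent_box)
  then obtain zj h where zj: "real zj = z$j" "\<bar>h\<bar> = 1/2" "zj = fst (Qb j) \<or> zj = snd (Qb j)"
      "zj = fst (Qa j) \<or> zj = snd (Qa j)" "real zj - h \<in> comp_set (Qb j)"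
      "real zj + h \<in> comp_set (Qa j)"
      "p$j < q$j \<Longrightarrow> zj = fst (Qa j)" "q$j < p$j \<Longrightarrow> zj = snd (Qa j)"
    using adjacent_at_level[OF sep_radius_nat_eq[OF rho] is_cellD[OF Qb(2)] _ near(2)
        is_cellD[OF Qa(2)] _ near(4) disj step(2)] by blast
  have zc: "z$i = real c" using p(2) Qb(5) by simp
  have Qa_slice: "meets_slice p i j Qa" using Qa(3) step(1) by (metis mem_ent_set meets_slice_def)
  have in_box_b: "plane_pt p i j (real c) b \<in> ent_box Qb" if "b \<in> comp_closure (Qb j)" for b
    using Qb(3,4) that comp_le[OF Qb(1), of i] by (auto simp: mem_ent_box comp_closure_def)
  have "real zj \<in> comp_closure (Qb j)"
    using zj(3) comp_le[OF Qb(1), of j] by (auto simp: comp_closure_def)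
  then obtain T where T: "T \<in> M" "plane_pt p i j (real c) (real zj) \<in> ent_set T"
    using covers mesh_ent_box_subset_domain[OF Qb(1)] in_box_b by blast
  have "plane_pt p i j (real c) (real zj + h) \<in> ent_set Qa"
    using mem_ent_set_plane_pt[OF ij Qa_slice] Qa(4,5) zj(6) by (simp add: comp_set_def)
  moreover have "plane_pt p i j (real c) (real zj - h) \<in> ent_box Qb"
    using in_box_b zj(5) comp_set_subset_closure[OF comp_le[OF Qb(1)]] by blast
  ultimately interpret junction_site N G M p i j c zj h Qa Qb T
    using two_dims ij generic Qa Qb zj T by unfold_locales auto
  have "z \<in> closure (ent_set T)"
    using junction_closure_near[OF rho zc] zj(1) near(1) by simp
  moreover have "p$j < q$j \<longrightarrow> real (fst (Qa j)) = z$j" "q$j < p$j \<longrightarrow> real (snd (Qa j)) = z$j"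
    using zj(1,7,8) by auto
  ultimately show ?thesis
    using is_tjunction_T ascell_data_T Qa(2) by blast
qed

text \<open>Moving from \<open>p\<close> to \<open>q\<close> one coordinate at a time, some single step leaves the skeleton.\<close>
lemma junction_on_staircase:
  assumes "finite A" and two_dims: "2 \<le> CARD('n)" and N_pos: "\<forall>k. 1 \<le> N k" and rho: "sep_radius z \<rho>"
  shows "p \<in> skel M i \<Longrightarrow> q \<notin> skel M i \<Longrightarrow> q \<in> closed_domain \<Longrightarrow> i \<notin> A \<Longrightarrow> p$i = z$i
    \<Longrightarrow> \<forall>k. k \<notin> A \<longrightarrow> q$k = p$k \<Longrightarrow> \<forall>k\<in>A. p$k \<noteq> q$k
    \<Longrightarrow> \<forall>k. k \<noteq> i \<longrightarrow> 0 < \<bar>p$k - z$k\<bar> \<and> \<bar>p$k - z$k\<bar> < \<rho> \<and> 0 < \<bar>q$k - z$k\<bar> \<and> \<bar>q$k - z$k\<bar> < \<rho>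
    \<Longrightarrow> \<exists>T Q j. j \<in> A \<and> is_tjunction N M T \<and> ascell_data M T = (Q, i, j) \<and> z \<in> closure (ent_set T)
      \<and> is_cell Q \<and> (p$j < q$j \<longrightarrow> real (fst (Q j)) = z$j) \<and> (q$j < p$j \<longrightarrow> real (snd (Q j)) = z$j)"
  using assms(1)
proof (induction A arbitrary: p rule: finite_induct)
  case empty
  then have "q = p" by (simp add: vec_eq_iff)
  then show ?case using empty.prems by simp
next
  case (insert j A)
  note prems = insert.prems
  define p' where "p' = (\<chi> k. if k = j then q$k else p$k)"
  have ij: "i \<noteq> j" using prems(4) by blast
  show ?case
  proof (cases "p' \<in> skel M i")
    case True
    have "i \<notin> A" "p'$i = z$i" "\<forall>k. k \<notin> A \<longrightarrow> q$k = p'$k" "\<forall>k\<in>A. p'$k \<noteq> q$k"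
      "\<forall>k. k \<noteq> i \<longrightarrow> 0 < \<bar>p'$k - z$k\<bar> \<and> \<bar>p'$k - z$k\<bar> < \<rho> \<and> 0 < \<bar>q$k - z$k\<bar> \<and> \<bar>q$k - z$k\<bar> < \<rho>"
      using prems insert.hyps(2) ij by (auto simp: p'_def)
    then have "\<exists>T Q j'. j' \<in> A \<and> is_tjunction N M T \<and> ascell_data M T = (Q, i, j')
      \<and> z \<in> closure (ent_set T) \<and> is_cell Q \<and> (p'$j' < q$j' \<longrightarrow> real (fst (Q j')) = z$j')
      \<and> (q$j' < p'$j' \<longrightarrow> real (snd (Q j')) = z$j')"
      using insert.IH[OF True prems(2,3)] by blast
    moreover have "p'$k = p$k" if "k \<in> A" for k using that insert.hyps(2) by (auto simp: p'_def)
    ultimately show ?thesis by (metis insertCI)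
  next
    case False
    have "p \<in> closed_domain" using prems(1) skel_subset_domain by blast
    then have "p' \<in> closed_domain" using prems(3) by (auto simp: p'_def mem_ent_box)
    moreover have "\<forall>k. k \<noteq> j \<longrightarrow> p'$k = p$k" "p$j \<noteq> p'$j" using prems(7) by (auto simp: p'_def)
    moreover have "\<forall>k. k \<noteq> i \<longrightarrow> k \<noteq> j \<longrightarrow> 0 < \<bar>p$k - z$k\<bar> \<and> \<bar>p$k - z$k\<bar> < \<rho>"
      "\<bar>p$j - z$j\<bar> < \<rho>" "0 < \<bar>p'$j - z$j\<bar>" "\<bar>p'$j - z$j\<bar> < \<rho>"
      using prems(8) ij by (auto simp: p'_def)
    ultimately obtain T Q where "is_tjunction N M T" "ascell_data M T = (Q, i, j)"
      "z \<in> closure (ent_set T)"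
      "is_cell Q" "p$j < p'$j \<longrightarrow> real (fst (Q j)) = z$j" "p'$j < p$j \<longrightarrow> real (snd (Q j)) = z$j"
      using junction_near_step[OF two_dims N_pos rho ij prems(1,5) False] by blast
    then show ?thesis by (intro exI[of _ T] exI[of _ Q] exI[of _ j]) (simp add: p'_def)
  qed
qed

lemma skel_point_nearby:
  assumes rho: "sep_radius z \<rho>" and z: "z \<in> skel M i" and \<tau>: "0 < \<tau>" "\<tau> < \<rho>"
  obtains p where "p \<in> skel M i" "p$i = z$i" "\<forall>k. k \<noteq> i \<longrightarrow> \<bar>p$k - z$k\<bar> = \<tau>"
proof -
  obtain Q where Q: "Q \<in> M" "is_cell Q" "z \<in> ent_box Q" "z$i \<in> {real (fst (Q i)), real (snd (Q i))}"
    using z by (auto simp: mem_skel)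
  define dir :: "'n \<Rightarrow> real" where "dir k = (if z$k < real (snd (Q k)) then 1 else -1)" for k
  define p where "p = (\<chi> k. if k = i then z$k else z$k + \<tau> * dir k)"
  have "z$k + \<tau> * dir k \<in> comp_closure (Q k)" for k
  proof -
    have z_k: "real (fst (Q k)) \<le> z$k" "z$k \<le> real (snd (Q k))"
      using Q(3) by (simp_all add: mem_ent_box comp_closure_def)
    have gap: "\<rho> \<le> \<bar>real m - z$k\<bar>" if "real m \<noteq> z$k" for m
      using rho that by (simp add: sep_radius_def)
    show ?thesis
    proof (cases "z$k < real (snd (Q k))")
      case True
      then show ?thesis using z_k gap[of "snd (Q k)"] \<tau> by (auto simp: dir_def comp_closure_def)
    next
      case False
      then have "real (fst (Q k)) \<noteq> z$k" using z_k is_cellD[OF Q(2), of k] by simp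
      then show ?thesis
        using False z_k gap[of "fst (Q k)"] \<tau> by (auto simp: dir_def comp_closure_def)
    qed
  qed
  then have "p \<in> ent_box Q" using Q(3) by (simp add: p_def mem_ent_box)
  then have "p \<in> skel M i" using Q by (auto simp: mem_skel p_def)
  moreover have "\<bar>p$k - z$k\<bar> = \<tau>" if "k \<noteq> i" for k using that \<tau> by (simp add: p_def dir_def)
  ultimately show ?thesis using that by (simp add: p_def)
qed

text \<open>Perturbing a last skeleton point \<open>z\<close> and a nearby exit point \<open>q\<close> into generic position: the
  coordinates in which \<open>q\<close> differs from \<open>z\<close> are taken from \<open>q\<close>, all others are moved by a
  small \<open>\<tau>\<close> into a cell of the skeleton at \<open>z\<close>.\<close>
lemma skeleton_exit_pair:
  assumes rho: "sep_radius z \<rho>" and z: "z \<in> skel M i"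
    and q: "q \<notin> skel M i" "q \<in> closed_domain" "q$i = z$i" and near: "\<forall>k. \<bar>q$k - z$k\<bar> < \<rho>"
  obtains p p' where "p \<in> skel M i" "p' \<notin> skel M i" "p' \<in> closed_domain" "p$i = z$i"
    "\<forall>k. q$k = z$k \<longrightarrow> p'$k = p$k" "\<forall>k. q$k \<noteq> z$k \<longrightarrow> p$k \<noteq> p'$k \<and> (p$k < p'$k \<longleftrightarrow> z$k < q$k)"
    "\<forall>k. k \<noteq> i \<longrightarrow> 0 < \<bar>p$k - z$k\<bar> \<and> \<bar>p$k - z$k\<bar> < \<rho> \<and> 0 < \<bar>p'$k - z$k\<bar> \<and> \<bar>p'$k - z$k\<bar> < \<rho>"
proof -
  obtain \<beta> where \<beta>: "\<beta> > 0" "ball q \<beta> \<subseteq> - skel M i"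
    using open_contains_ball[THEN iffD1, OF open_Compl[OF closed_skel], rule_format, of q] q(1)
      by blast
  define J where "J = {k. q$k \<noteq> z$k}"
  have "0 < \<rho>" using rho by (simp add: sep_radius_def)
  define bounds where "bounds = insert \<rho> (insert (\<beta> / real CARD('n)) ((\<lambda>k. \<bar>q$k - z$k\<bar>) ` J))"
  obtain \<tau> where "0 < \<tau>" "\<forall>s\<in>bounds. \<tau> < s"
    using finite_pos_lower_bound[of bounds] \<open>0 < \<rho>\<close> \<beta>(1) by (auto simp: bounds_def J_def)
  then have \<tau>: "0 < \<tau>" "\<tau> < \<rho>" "\<And>k. k \<in> J \<Longrightarrow> \<tau> < \<bar>q$k - z$k\<bar>"
    "real CARD('n) * \<tau> < \<beta>"
    by (auto simp: bounds_def field_simps)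
  obtain p where p: "p \<in> skel M i" "p$i = z$i" "\<forall>k. k \<noteq> i \<longrightarrow> \<bar>p$k - z$k\<bar> = \<tau>"
    using skel_point_nearby[OF rho z \<tau>(1,2)] by blast
  define p' where "p' = (\<chi> k. if k \<in> J then q$k else p$k)"
  have "norm (q - p') \<le> (\<Sum>k\<in>UNIV. \<bar>(q - p')$k\<bar>)" by (rule norm_le_l1_cart)
  also have "\<dots> \<le> real CARD('n) * \<tau>"
  proof -
    have "\<bar>(q - p')$k\<bar> \<le> \<tau>" for k
      using p(2,3) q(3) \<tau>(1) by (cases "k = i") (auto simp: p'_def J_def)
    then show ?thesis using sum_bounded_above[of UNIV "\<lambda>k. \<bar>(q - p')$k\<bar>" \<tau>] by simp
  qed
  finally have "p' \<in> ball q \<beta>" using \<tau>(4) by (simp add: dist_norm)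
  then have "p' \<notin> skel M i" using \<beta>(2) by blast
  moreover have "p \<in> closed_domain" using p(1) skel_subset_domain by blast
  then have "p' \<in> closed_domain" using q(2) by (auto simp: p'_def mem_ent_box)
  moreover have "\<forall>k. q$k \<noteq> z$k \<longrightarrow> p$k \<noteq> p'$k \<and> (p$k < p'$k \<longleftrightarrow> z$k < q$k)"
  proof (intro allI impI)
    fix k assume "q$k \<noteq> z$k"
    then have "k \<noteq> i" using q(3) by blast
    then have "\<bar>p$k - z$k\<bar> < \<bar>q$k - z$k\<bar>" using p(3) \<tau>(3)[of k] \<open>q$k \<noteq> z$k\<close> by (simp add: J_def)
    then show "p$k \<noteq> p'$k \<and> (p$k < p'$k \<longleftrightarrow> z$k < q$k)"
      using \<open>q$k \<noteq> z$k\<close> by (auto simp: p'_def J_def abs_real_def split: if_splits)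
  qed
  moreover have "\<forall>k. q$k = z$k \<longrightarrow> p'$k = p$k" by (simp add: p'_def J_def)
  moreover have "\<forall>k. k \<noteq> i \<longrightarrow>
      0 < \<bar>p$k - z$k\<bar> \<and> \<bar>p$k - z$k\<bar> < \<rho> \<and> 0 < \<bar>p'$k - z$k\<bar> \<and> \<bar>p'$k - z$k\<bar> < \<rho>"
    using p(3) near \<tau>(1,2) by (auto simp: p'_def J_def)
  ultimately show ?thesis using that[of p p'] p(1,2) by blast
qed

lemma skeleton_exit_along_segment:
  assumes x: "x \<in> skel M i" and y: "y \<notin> skel M i" "y \<in> closed_domain"
  obtains t s \<rho> where "0 \<le> t" "t < 1" "0 < s" "x + t *\<^sub>R (y - x) \<in> skel M i"
    "sep_radius (x + t *\<^sub>R (y - x)) \<rho>" "x + (t + s) *\<^sub>R (y - x) \<notin> skel M i"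
    "x + (t + s) *\<^sub>R (y - x) \<in> closed_domain" "\<forall>k. s * \<bar>y$k - x$k\<bar> < \<rho>"
proof -
  obtain t where t: "0 \<le> t" "t < 1" "x + t *\<^sub>R (y - x) \<in> skel M i"
    "\<And>u. t < u \<Longrightarrow> u \<le> 1 \<Longrightarrow> x + u *\<^sub>R (y - x) \<notin> skel M i"
    using last_point_in_closed[OF closed_skel x y(1)] by blast
  obtain \<rho> where \<rho>: "sep_radius (x + t *\<^sub>R (y - x)) \<rho>" using sep_radius_exists by blast
  then have "0 < \<rho>" by (simp add: sep_radius_def)
  define s where "s = min ((1 - t) / 2) (\<rho> / (2 * (norm (y - x) + 1)))"
  have "0 < 2 * (norm (y - x) + 1)" by (simp add: add_nonneg_pos)
  then have "0 < s" using t(2) \<open>0 < \<rho>\<close> by (simp add: s_def)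
  moreover have "s \<le> (1 - t) / 2" unfolding s_def by (rule min.cobounded1)
  then have "t + s \<le> 1" using t(2) by (simp add: field_simps)
  ultimately have s: "0 < s" "t + s \<le> 1" by blast+
  have "s * \<bar>y$k - x$k\<bar> < \<rho>" for k
  proof -
    have "s * \<bar>y$k - x$k\<bar> \<le> \<rho> / (2 * (norm (y - x) + 1)) * norm (y - x)"
      using component_le_norm_cart[of "y - x" k] s(1) \<open>0 < \<rho>\<close>
        by (intro mult_mono) (auto simp: s_def)
    also have "\<dots> = \<rho> * (norm (y - x) / (2 * (norm (y - x) + 1)))" by simp
    also have "\<dots> < \<rho>"
    proof -
      have "norm (y - x) < 2 * (norm (y - x) + 1)" by (simp add: add_nonneg_pos)
      then have "norm (y - x) / (2 * (norm (y - x) + 1)) < 1" by (simp add: add_nonneg_pos)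
      then show ?thesis
        using mult_strict_left_mono[of _ 1 \<rho>] \<open>0 < \<rho>\<close> by (simp del: times_divide_eq_right)
    qed
    finally show ?thesis .
  qed
  moreover have "x + (t + s) *\<^sub>R (y - x) \<in> closed_segment x y"
    using t(1) s by (auto simp: in_segment algebra_simps intro!: exI[of _ "t + s"])
  then have "x + (t + s) *\<^sub>R (y - x) \<in> closed_domain"
    using convex_contains_segment[THEN iffD1, OF convex_ent_box] x skel_subset_domain y(2) by blast
  ultimately show ?thesis using that t s \<rho> by auto
qed

lemma junction_near_exit:
  assumes two_dims: "2 \<le> CARD('n)" and N_pos: "\<forall>k. 1 \<le> N k" and rho: "sep_radius z \<rho>"
    and z: "z \<in> skel M i" and q: "q \<notin> skel M i" "q \<in> closed_domain" "q$i = z$i"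
    and near: "\<forall>k. \<bar>q$k - z$k\<bar> < \<rho>"
  shows "\<exists>T Q j. q$j \<noteq> z$j \<and> is_tjunction N M T \<and> ascell_data M T = (Q, i, j)
    \<and> z \<in> closure (ent_set T) \<and> is_cell Q \<and> (z$j < q$j \<longrightarrow> real (fst (Q j)) = z$j)
    \<and> (q$j < z$j \<longrightarrow> real (snd (Q j)) = z$j)"
proof -
  obtain r r' where r: "r \<in> skel M i" "r' \<notin> skel M i" "r' \<in> closed_domain" "r$i = z$i"
    and same: "\<forall>k. q$k = z$k \<longrightarrow> r'$k = r$k"
    and differ: "\<forall>k. q$k \<noteq> z$k \<longrightarrow> r$k \<noteq> r'$k \<and> (r$k < r'$k \<longleftrightarrow> z$k < q$k)"
    and close: "\<forall>k. k \<noteq> i \<longrightarrow> 0 < \<bar>r$k - z$k\<bar> \<and> \<bar>r$k - z$k\<bar> < \<rho> \<and> 0 < \<bar>r'$k - z$k\<bar> \<and> \<bar>r'$k - z$k\<bar> < \<rho>"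
    using skeleton_exit_pair[OF rho z q near] by blast
  define A where "A = {k. q$k \<noteq> z$k}"
  have "\<forall>k. k \<notin> A \<longrightarrow> r'$k = r$k" "\<forall>k\<in>A. r$k \<noteq> r'$k" "i \<notin> A"
    using same differ q(3) by (simp_all add: A_def)
  then obtain T Q j where TQ: "j \<in> A" "is_tjunction N M T" "ascell_data M T = (Q, i, j)"
    "z \<in> closure (ent_set T)" "is_cell Q" "r$j < r'$j \<longrightarrow> real (fst (Q j)) = z$j"
    "r'$j < r$j \<longrightarrow> real (snd (Q j)) = z$j"
    using junction_on_staircase[OF finite two_dims N_pos rho r(1-3) _ r(4) _ _ close] by blast
  moreover have "r$j < r'$j \<longleftrightarrow> z$j < q$j" "r'$j < r$j \<longleftrightarrow> q$j < z$j" "q$j \<noteq> z$j"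
    using differ TQ(1) by (auto simp: A_def)
  ultimately show ?thesis by (intro exI[of _ T] exI[of _ Q] exI[of _ j]) simp
qed

lemma junction_on_segment:
  assumes two_dims: "2 \<le> CARD('n)" and N_pos: "\<forall>k. 1 \<le> N k"
    and x: "x \<in> skel M i" and y: "y \<notin> skel M i" "y \<in> closed_domain" and xy: "x$i = y$i"
  obtains t j T Q where "0 \<le> t" "t < 1" "x$j \<noteq> y$j" "is_tjunction N M T"
    "ascell_data M T = (Q, i, j)"
    "x + t *\<^sub>R (y - x) \<in> closure (ent_set T)" "is_cell Q"
    "x$j < y$j \<longrightarrow> real (fst (Q j)) = (1 - t) * x$j + t * y$j"
    "y$j < x$j \<longrightarrow> real (snd (Q j)) = (1 - t) * x$j + t * y$j"
proof -
  obtain t s \<rho> where t: "0 \<le> t" "t < 1" "0 < s" and z: "x + t *\<^sub>R (y - x) \<in> skel M i"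
    and \<rho>: "sep_radius (x + t *\<^sub>R (y - x)) \<rho>" and q: "x + (t + s) *\<^sub>R (y - x) \<notin> skel M i"
      "x + (t + s) *\<^sub>R (y - x) \<in> closed_domain" and near: "\<forall>k. s * \<bar>y$k - x$k\<bar> < \<rho>"
    using skeleton_exit_along_segment[OF x y] by blast
  define z where "z = x + t *\<^sub>R (y - x)"
  define q where "q = x + (t + s) *\<^sub>R (y - x)"
  have qz: "q$k = z$k + s * (y$k - x$k)" for k by (simp add: q_def z_def algebra_simps)
  have "q$i = z$i" using qz[of i] xy by simp
  moreover have "\<forall>k. \<bar>q$k - z$k\<bar> < \<rho>" using qz near t(3) by (simp add: abs_mult)
  ultimately obtain T Q j where TQ: "q$j \<noteq> z$j" "is_tjunction N M T" "ascell_data M T = (Q, i, j)"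
    "z \<in> closure (ent_set T)" "is_cell Q" "z$j < q$j \<longrightarrow> real (fst (Q j)) = z$j"
    "q$j < z$j \<longrightarrow> real (snd (Q j)) = z$j"
    using junction_near_exit[OF two_dims N_pos \<rho>[folded z_def] z[folded z_def] q[folded q_def]]
      by blast
  have "0 < s * (y$j - x$j) \<longleftrightarrow> x$j < y$j" "s * (y$j - x$j) < 0 \<longleftrightarrow> y$j < x$j"
    using t(3) by (simp_all add: zero_less_mult_iff mult_less_0_iff)
  then have sign: "z$j < q$j \<longleftrightarrow> x$j < y$j" "q$j < z$j \<longleftrightarrow> y$j < x$j" by (simp_all add: qz)
  have zj: "z$j = (1 - t) * x$j + t * y$j" by (simp add: z_def algebra_simps)
  show ?thesis
  proof (rule that[of t j T Q])
    show "x$j \<noteq> y$j" using TQ(1) sign by linarith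
    show "x + t *\<^sub>R (y - x) \<in> closure (ent_set T)" using TQ(4) by (simp add: z_def)
    show "x$j < y$j \<longrightarrow> real (fst (Q j)) = (1 - t) * x$j + t * y$j" using TQ(6) sign(1) zj by simp
    show "y$j < x$j \<longrightarrow> real (snd (Q j)) = (1 - t) * x$j + t * y$j" using TQ(7) sign(2) zj by simp
  qed (use t TQ in simp_all)
qed

end

theorem lemma2p3:
  fixes N p :: "'n::finite \<Rightarrow> nat" and M :: "'n entity set"
    and x y :: "real^'n" and i :: 'n
  assumes "CARD('n) \<ge> 2"
    and "\<forall>k. N k \<ge> 1" and "\<forall>k. p k \<ge> 1"
    and "is_mesh N p M"
    and "x \<in> closure (Omega N)" and "y \<in> closure (Omega N)"
    and "x$i = y$i" and "x \<in> skel M i" and "y \<notin> skel M i"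
  shows "\<exists>T. is_tjunction N M T \<and> odir M T = i \<and>
    (let Q = ascell M T; j = pdir M T in
       closure (ent_set T) \<inter> convex hull {x, y} \<noteq> {} \<and> x$j \<noteq> y$j \<and>
       comp_set (Q j) \<inter> convex hull {x$j, y$j} \<noteq> {})"
proof -
  obtain G where "mesh_complex N G M" using mesh_complex_is_mesh assms(4) by blast
  then interpret mesh_complex N G M .
  have "y \<in> closed_domain" using assms(2,6) closure_Omega by blast
  obtain t j T Q where t: "0 \<le> t" "t < 1" and TQ: "x$j \<noteq> y$j" "is_tjunction N M T"
    "ascell_data M T = (Q, i, j)" "x + t *\<^sub>R (y - x) \<in> closure (ent_set T)" "is_cell Q"
    "x$j < y$j \<longrightarrow> real (fst (Q j)) = (1 - t) * x$j + t * y$j"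
    "y$j < x$j \<longrightarrow> real (snd (Q j)) = (1 - t) * x$j + t * y$j"
    by (rule junction_on_segment[OF assms(1,2,8,9) \<open>y \<in> closed_domain\<close> assms(7)])
  have "comp_set (Q j) \<inter> convex hull {x$j, y$j} \<noteq> {}"
    using comp_meets_segment[OF is_cellD[OF TQ(5)] t] TQ(1,6,7) by blast
  moreover have "x + t *\<^sub>R (y - x) = (1 - t) *\<^sub>R x + t *\<^sub>R y" by (simp add: algebra_simps)
  then have "x + t *\<^sub>R (y - x) \<in> convex hull {x, y}"
    using t by (auto simp: in_segment segment_convex_hull[symmetric])
  then have "closure (ent_set T) \<inter> convex hull {x, y} \<noteq> {}" using TQ(4) by blast
  moreover have "odir M T = i" "pdir M T = j" "ascell M T = Q"
    using TQ(3) by (simp_all add: odir_def pdir_def ascell_def)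
  ultimately show ?thesis using TQ(1,2) by (intro exI[of _ T]) (simp add: Let_def)
qed

end
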